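(* Let $r,d,d_1,d_2\in\mathbb{N}$, $s_i,t_i\in\mathbb{N}$ for $i\in[r]$. Let $\mathcal{A}=\{\mathbf{a}^1,\dots,\mathbf{a}^r\}\subseteq\mathbb{Z}^d$ be linearly independent such that some $\overline{\omega}\in\mathbb{Q}^d$ satisfies $\overline{\omega}\cdot\mathbf{a}^i=1$ for all $i$. Let $\mathcal{B}=\{\mathbf{b}^i_j: i\in[r], j\in[s_i]\}\subseteq\mathbb{Z}^{d_1}$ and $\mathcal{C}=\{\mathbf{c}^i_k: i\in[r],k\in[t_i]\}\subseteq\mathbb{Z}^{d_2}$ be point configurations for which there exist linear maps $\pi_1:\mathbb{Z}^{d_1}\to\mathbb{Z}^d$, $\pi_2:\mathbb{Z}^{d_2}\to\mathbb{Z}^d$ with $\pi_1(\mathbf{b}^i_j)=\mathbf{a}^i$ and $\pi_2(\mathbf{c}^i_k)=\mathbf{a}^i$ for all $i,j,k$. Let $P=\operatorname{conv}(\mathcal{B})$, $Q=\operatorname{conv}(\mathcal{C})$, and let $w=(w^i_j)$, $\tilde w=(\tilde w^i_k)$ be positive weight vectors on $\mathcal{B}$, $\mathcal{C}$. Suppose $(\mathcal{B},w)$ and $(\mathcal{C},\tilde w)$ have rational linear precision, with blending functions $\{\beta^i_j\}$ (rational functions of $\mathbf{p}\in\mathbb{C}^{d_1}$) and $\{\tilde\beta^i_k\}$ (rational functions of $\mathbf{q}\in\mathbb{C}^{d_2}$) satisfying the definition of rational linear precision. Then the toric fiber product $\mathcal{B}\times_{\mathcal{A}}\mathcal{C}$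 with weights $w_{\mathcal{B}\times_{\mathcal{A}}\mathcal{C}}=(w^i_j\tilde w^i_k)$ has rational linear precision (i.e. the polytope $P\times_{\mathcal{A}}Q$ has rational linear precision). Moreover, blending functions with rational linear precision for $P\times_{\mathcal{A}}Q$ are given by \[\beta^i_{j,k}(\mathbf{p},\mathbf{q})=\frac{\beta^i_j(\mathbf{p})\,\tilde\beta^i_k(\mathbf{q})}{\sum_{j'\in[s_i]}\beta^i_{j'}(\mathbf{p})}=\frac{\beta^i_j(\mathbf{p})\,\tilde\beta^i_k(\mathbf{q})}{\sum_{k'\in[t_i]}\tilde\beta^i_{k'}(\mathbf{q})},\qquad (\mathbf{p},\mathbf{q})\in P\times_{\mathcal{A}}Q,\] for $i\in[r]$, $j\in[s_i]$, $k\in[t_i]$.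
   Context: Toric fiber product: $\mathcal{B}\times_{\mathcal{A}}\mathcal{C}=\{\mathbf{m}^i_{j,k}:=(\mathbf{b}^i_j,\mathbf{c}^i_k): i\in[r], j\in[s_i],k\in[t_i]\}\subseteq\mathbb{Z}^{d_1+d_2}$, and $P\times_{\mathcal{A}}Q:=\operatorname{conv}(\mathcal{B}\times_{\mathcal{A}}\mathcal{C})$. Scaled projective toric variety: for a finite point configuration $\mathcal{S}\subseteq\mathbb{Z}^n$ with positive weights $w=(w_{\mathbf{s}})$, $X_{\mathcal{S},w}$ is the Zariski closure of the image of $(\mathbb{C}^* )^n\to\mathbb{P}^{|\mathcal{S}|-1}$, $\mathbf{t}\mapsto[w_{\mathbf{s}}\mathbf{t}^{\mathbf{s}}]_{\mathbf{s}\in\mathcal{S}}$ (if the all-ones vector is not in the row span of the matrix with columns $\mathbf{s}$, a row of ones is appended). Rational linear precision: $(\mathcal{S},w)$, with polytope $\Pi=\operatorname{conv}(\mathcal{S})$, has rational linear precision if there are rational functions $\{\hat\beta_{\mathbf{s}}\}_{\mathbf{s}\in\mathcal{S}}$ on $\mathbb{C}^n$ (called blending functions) such that (1) $\sum_{\mathbf{s}}\hat\beta_{\mathbf{s}}=1$; (2) $\hat\beta=(\hat\beta_{\mathbf{s}})_{\mathbf{s}}:\mathbb{C}^n\dashrightarrow X_{\mathcal{S},w}\subseteq\mathbb{P}^{|\mathcal{S}|-1}$ is a rational parametrization of $X_{\mathcal{S},w}$; (3) for every $\mathbf{p}$ in the relative interior of $\Pi$, each $\hat\beta_{\mathbf{s}}(\mathbf{p})$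 is defined and a nonnegative real number; (4) $\sum_{\mathbf{s}}\hat\beta_{\mathbf{s}}(\mathbf{p})\,\mathbf{s}=\mathbf{p}$ for all $\mathbf{p}\in\Pi$. *)

theory Defs
  imports "HOL-Analysis.Analysis"
begin

definition rvec :: "int^'n \<Rightarrow> real^'n" where
  "rvec s = (\<chi> l. real_of_int (s $ l))"

definition cvec :: "real^'n \<Rightarrow> complex^'n" where
  "cvec p = (\<chi> l. complex_of_real (p $ l))"

text \<open>Concatenation Z^{d1} x Z^{d2} = Z^{d1+d2}, coordinates indexed by the sum type.\<close>
definition vjoin :: "'a^'n1::finite \<Rightarrow> 'a^'n2::finite \<Rightarrow> 'a^('n1 + 'n2)" where
  "vjoin b c = (\<chi> l. case_sum (\<lambda>x. b $ x) (\<lambda>y. c $ y) l)"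

definition vleft :: "'a^('n1::finite + 'n2::finite) \<Rightarrow> 'a^'n1" where
  "vleft m = (\<chi> l. m $ Inl l)"

definition vright :: "'a^('n1::finite + 'n2::finite) \<Rightarrow> 'a^'n2" where
  "vright m = (\<chi> l. m $ Inr l)"

definition cpoly :: "(complex^'n \<Rightarrow> complex) \<Rightarrow> bool" where
  "cpoly f \<longleftrightarrow> (\<exists>E c. finite (E :: ('n \<Rightarrow> nat) set) \<and>
      f = (\<lambda>x. \<Sum>e\<in>E. c e * (\<Prod>l\<in>UNIV. (x $ l) ^ e l)))"

text \<open>A rational function on C^n, represented by a numerator/denominator pair.\<close>
type_synonym 'n ratfun = "(complex^'n \<Rightarrow> complex) \<times> (complex^'n \<Rightarrow> complex)"

definition is_ratfun :: "'n::finite ratfun \<Rightarrow> bool" where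
  "is_ratfun R \<longleftrightarrow> cpoly (fst R) \<and> cpoly (snd R) \<and> snd R \<noteq> (\<lambda>_. 0)"

definition rf_defined :: "'n::finite ratfun \<Rightarrow> complex^'n \<Rightarrow> bool" where
  "rf_defined R x \<longleftrightarrow> snd R x \<noteq> 0"

definition rf_eval :: "'n::finite ratfun \<Rightarrow> complex^'n \<Rightarrow> complex" where
  "rf_eval R x = fst R x / snd R x"

text \<open>Homogeneous polynomial functions in variables indexed by a finite set I.
  Points of C^I are functions 'v => complex vanishing outside I.\<close>
definition hpoly :: "'v set \<Rightarrow> (('v \<Rightarrow> complex) \<Rightarrow> complex) \<Rightarrow> bool" where
  "hpoly I F \<longleftrightarrow> (\<exists>E c (\<delta>::nat). finite (E :: ('v \<Rightarrow> nat) set) \<and>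
      (\<forall>e\<in>E. (\<forall>v. v \<notin> I \<longrightarrow> e v = 0) \<and> (\<Sum>v\<in>I. e v) = \<delta>) \<and>
      F = (\<lambda>y. \<Sum>e\<in>E. c e * (\<Prod>v\<in>I. (y v) ^ e v)))"

text \<open>Nonzero representatives of points of the projective space P(C^I).\<close>
definition proj_pts :: "'v set \<Rightarrow> ('v \<Rightarrow> complex) set" where
  "proj_pts I = {y. (\<forall>v. v \<notin> I \<longrightarrow> y v = 0) \<and> (\<exists>v\<in>I. y v \<noteq> 0)}"

definition proj_closure :: "'v set \<Rightarrow> ('v \<Rightarrow> complex) set \<Rightarrow> ('v \<Rightarrow> complex) set" where
  "proj_closure I Y = {y \<in> proj_pts I. \<forall>F. hpoly I F \<and> (\<forall>z\<in>Y. F z = 0) \<longrightarrow> F y = 0}"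

definition toric_var :: "(int^'n) set \<Rightarrow> (int^'n \<Rightarrow> real) \<Rightarrow> ((int^'n) \<Rightarrow> complex) set" where
  "toric_var S w = proj_closure S
     {(\<lambda>s. if s \<in> S then complex_of_real (w s) * (\<Prod>l\<in>UNIV. (t $ l) powi (s $ l)) else 0)
       | t :: complex^'n. \<forall>l. t $ l \<noteq> 0}"

definition blending_functions ::
  "(int^'n::finite) set \<Rightarrow> (int^'n \<Rightarrow> real) \<Rightarrow> (int^'n \<Rightarrow> 'n ratfun) \<Rightarrow> bool" where
  "blending_functions S w \<beta> \<longleftrightarrow>
     (\<forall>s\<in>S. is_ratfun (\<beta> s)) \<and>
     \<comment> \<open>(1) the blending functions sum to one\<close>
     (\<forall>x. (\<forall>s\<in>S. rf_defined (\<beta> s) x) \<longrightarrow> (\<Sum>s\<in>S. rf_eval (\<beta> s) x) = 1) \<and>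
     \<comment> \<open>(2) rational parametrization of X_{S,w}: image lies in X and is Zariski dense in X\<close>
     (let Y = {(\<lambda>s. if s \<in> S then rf_eval (\<beta> s) x else 0) | x. \<forall>s\<in>S. rf_defined (\<beta> s) x}
      in Y \<subseteq> toric_var S w \<and> proj_closure S Y = toric_var S w) \<and>
     \<comment> \<open>(3) defined and nonnegative real on the relative interior of the polytope\<close>
     (\<forall>p\<in>rel_interior (convex hull (rvec ` S)). \<forall>s\<in>S.
        rf_defined (\<beta> s) (cvec p) \<and> (\<exists>u::real. u \<ge> 0 \<and> rf_eval (\<beta> s) (cvec p) = complex_of_real u)) \<and>
     \<comment> \<open>(4) linear precision\<close>
     (\<forall>p\<in>convex hull (rvec ` S). (\<forall>s\<in>S. rf_defined (\<beta> s) (cvec p)) \<longrightarrow>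
        (\<forall>l. (\<Sum>s\<in>S. rf_eval (\<beta> s) (cvec p) * of_int (s $ l)) = cvec p $ l))"

definition rational_linear_precision :: "(int^'n) set \<Rightarrow> (int^'n \<Rightarrow> real) \<Rightarrow> bool" where
  "rational_linear_precision S w \<longleftrightarrow> (\<exists>\<beta>. blending_functions S w \<beta>)"

definition toric_fiber_product ::
  "nat \<Rightarrow> (nat \<Rightarrow> nat) \<Rightarrow> (nat \<Rightarrow> nat) \<Rightarrow> (nat \<Rightarrow> nat \<Rightarrow> int^'n1::finite) \<Rightarrow> (nat \<Rightarrow> nat \<Rightarrow> int^'n2::finite)
     \<Rightarrow> (int^('n1 + 'n2)) set" where
  "toric_fiber_product r s t b c =
     {vjoin (b i j) (c i k) | i j k. i < r \<and> j < s i \<and> k < t i}"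

end

theory Submission
  imports Defs "HOL-Complex_Analysis.Conformal_Mappings"
begin

text \<open>
  Write \<open>\<lambda>\<^sub>i\<close> for the sum of the blending functions \<open>\<beta>\<close> over the \<open>i\<close>-th fibre of \<open>B\<close>.
  Applying \<open>\<pi>\<^sub>1\<close> to the linear precision identity \<open>\<Sigma>\<^sub>x \<beta>\<^sub>x(p) x = p\<close> gives
  \<open>\<pi>\<^sub>1 p = \<Sigma>\<^sub>i \<lambda>\<^sub>i(p) a\<^sup>i\<close>, and since the \<open>a\<^sup>i\<close> are linearly independent, \<open>\<lambda>\<^sub>i(p)\<close> is the
  \<open>i\<close>-th coordinate of \<open>\<pi>\<^sub>1 p\<close>: a linear function, nonnegative on \<open>P\<close> and positive on its
  relative interior. On \<open>P \<times>\<^sub>A Q\<close> we have \<open>\<pi>\<^sub>1 p = \<pi>\<^sub>2 q\<close>, so the fibre sums of \<open>\<beta>\<close> and \<open>\<beta>'\<close>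
  agree. This gives the two expressions for \<open>\<gamma>\<^sup>i\<^sub>j\<^sub>k = \<beta>\<^sup>i\<^sub>j \<beta>'\<^sup>i\<^sub>k / \<lambda>\<^sub>i\<close>, and summing over
  one factor at a time yields the partition of unity, nonnegativity and linear precision.

  The map \<open>\<gamma>\<close> is \<open>(\<beta>, \<beta>')\<close> followed by the gluing map \<open>(Y, Z) \<mapsto> (Y\<^sub>x Z\<^sub>y / \<Sigma>\<^sub>x\<^sub>' Y\<^sub>x\<^sub>')\<close>.
  Pulling a homogeneous polynomial back along the gluing map and clearing denominators gives a
  polynomial that is homogeneous in \<open>Y\<close> and in \<open>Z\<close> separately, so its vanishing passes from the
  images of \<open>\<beta>\<close> and \<open>\<beta>'\<close> to their Zariski closures \<open>X\<^sub>B\<close>, \<open>X\<^sub>C\<close> and back to their tori. The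
  torus of \<open>X\<^sub>B\<^sub>\<times>\<^sub>A\<^sub>C\<close> is glued from the tori of \<open>X\<^sub>B\<close> and \<open>X\<^sub>C\<close> after rescaling the latter
  fibrewise, which is possible because the \<open>a\<^sup>i\<close> are independent; the denominators that may
  vanish on the torus are removed by the identity theorem along one-parameter subgroups.
\<close>

section \<open>Polynomial functions\<close>

definition gpoly :: "'v set \<Rightarrow> (nat \<Rightarrow> bool) \<Rightarrow> (('v \<Rightarrow> complex) \<Rightarrow> complex) \<Rightarrow> bool" where
  "gpoly I P F \<longleftrightarrow> (\<exists>E c. finite (E :: ('v \<Rightarrow> nat) set) \<and>
      (\<forall>e\<in>E. (\<forall>v. v \<notin> I \<longrightarrow> e v = 0) \<and> P (\<Sum>v\<in>I. e v)) \<and>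
      F = (\<lambda>y. \<Sum>e\<in>E. c e * (\<Prod>v\<in>I. (y v) ^ e v)))"

lemma hpoly_iff_gpoly: "hpoly I F \<longleftrightarrow> (\<exists>d. gpoly I (\<lambda>k. k = d) F)"
  unfolding hpoly_def gpoly_def by blast

lemma cpoly_iff_gpoly: "cpoly f \<longleftrightarrow> gpoly (UNIV::'n::finite set) (\<lambda>_. True) (\<lambda>y. f (vec_lambda y))"
  unfolding cpoly_def gpoly_def by (auto simp: fun_eq_iff) (metis, metis vec_lambda_eta)

lemma gpoly_intro:
  fixes J :: "'j set" and \<epsilon> :: "'j \<Rightarrow> 'v \<Rightarrow> nat"
  assumes "finite J" "\<forall>j\<in>J. (\<forall>v. v \<notin> I \<longrightarrow> \<epsilon> j v = 0) \<and> P (\<Sum>v\<in>I. \<epsilon> j v)"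
    and "F = (\<lambda>y. \<Sum>j\<in>J. c j * (\<Prod>v\<in>I. (y v) ^ \<epsilon> j v))"
  shows "gpoly I P F"
  unfolding gpoly_def
proof (intro exI conjI)
  show "finite (\<epsilon> ` J)" using assms by simp
  show "\<forall>e\<in>\<epsilon> ` J. (\<forall>v. v \<notin> I \<longrightarrow> e v = 0) \<and> P (\<Sum>v\<in>I. e v)" using assms(2) by auto
  show "F = (\<lambda>y. \<Sum>e\<in>\<epsilon> ` J. (\<Sum>j\<in>{j\<in>J. \<epsilon> j = e}. c j) * (\<Prod>v\<in>I. (y v) ^ e v))"
  proof
    fix y
    have "(\<Sum>e\<in>\<epsilon> ` J. (\<Sum>j\<in>{j\<in>J. \<epsilon> j = e}. c j) * (\<Prod>v\<in>I. (y v) ^ e v))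
        = (\<Sum>e\<in>\<epsilon> ` J. (\<Sum>j\<in>{j\<in>J. \<epsilon> j = e}. c j * (\<Prod>v\<in>I. (y v) ^ \<epsilon> j v)))"
      by (auto simp: sum_distrib_right intro!: sum.cong)
    also have "\<dots> = (\<Sum>j\<in>J. c j * (\<Prod>v\<in>I. (y v) ^ \<epsilon> j v))"
      using sum.image_gen[OF assms(1), of "\<lambda>j. c j * (\<Prod>v\<in>I. (y v) ^ \<epsilon> j v)" \<epsilon>] by simp
    finally show "F y = (\<Sum>e\<in>\<epsilon> ` J. (\<Sum>j\<in>{j\<in>J. \<epsilon> j = e}. c j) * (\<Prod>v\<in>I. (y v) ^ e v))"
      using assms(3) by simp
  qed
qed

lemma gpoly_mono: "gpoly I P F \<Longrightarrow> (\<And>k. P k \<Longrightarrow> Q k) \<Longrightarrow> gpoly I Q F"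
  unfolding gpoly_def by blast

lemma gpoly_const: "gpoly I (\<lambda>k. k = 0) (\<lambda>_. c)"
  by (rule gpoly_intro[where J="{()}" and \<epsilon>="\<lambda>_ _. 0" and c="\<lambda>_. c"]) simp_all

lemma gpoly_zero: "gpoly I P (\<lambda>_. 0)"
  by (rule gpoly_intro[where J="{}::unit set"]) auto

lemma gpoly_var:
  assumes "finite I" "v \<in> I"
  shows "gpoly I (\<lambda>k. k = 1) (\<lambda>y. y v)"
proof (rule gpoly_intro[where J="{()}" and \<epsilon>="\<lambda>_ u. if u = v then 1 else 0" and c="\<lambda>_. 1"])
  show "\<forall>j\<in>{()}. (\<forall>u. u \<notin> I \<longrightarrow> (if u = v then 1 else 0) = 0) \<and> (\<Sum>u\<in>I. if u = v then 1 else 0) = (1::nat)"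
    using assms by auto
  show "(\<lambda>y. y v) = (\<lambda>y. \<Sum>j\<in>{()}. 1 * (\<Prod>u\<in>I. y u ^ (if u = v then 1 else 0)))"
    using assms by (auto simp: if_distrib cong: if_cong)
qed simp

lemma gpoly_add:
  assumes "gpoly I P F" "gpoly I P G"
  shows "gpoly I P (\<lambda>y. F y + G y)"
proof -
  obtain E1 c1 where 1: "finite E1" "\<forall>e\<in>E1. (\<forall>v. v \<notin> I \<longrightarrow> e v = 0) \<and> P (\<Sum>v\<in>I. e v)"
    "F = (\<lambda>y. \<Sum>e\<in>E1. c1 e * (\<Prod>v\<in>I. (y v) ^ e v))" using assms(1) unfolding gpoly_def by blast
  obtain E2 c2 where 2: "finite E2" "\<forall>e\<in>E2. (\<forall>v. v \<notin> I \<longrightarrow> e v = 0) \<and> P (\<Sum>v\<in>I. e v)"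
    "G = (\<lambda>y. \<Sum>e\<in>E2. c2 e * (\<Prod>v\<in>I. (y v) ^ e v))" using assms(2) unfolding gpoly_def by blast
  show ?thesis
    by (rule gpoly_intro[where J="E1 <+> E2" and \<epsilon>="case_sum id id" and c="case_sum c1 c2"])
       (use 1 2 in \<open>auto simp: sum.Plus comp_def\<close>)
qed

lemma gpoly_mult:
  assumes "gpoly I P F" "gpoly I Q G"
  shows "gpoly I (\<lambda>k. \<exists>a b. P a \<and> Q b \<and> k = a + b) (\<lambda>y. F y * G y)"
proof -
  obtain E1 c1 where 1: "finite E1" "\<forall>e\<in>E1. (\<forall>v. v \<notin> I \<longrightarrow> e v = 0) \<and> P (\<Sum>v\<in>I. e v)"
    "F = (\<lambda>y. \<Sum>e\<in>E1. c1 e * (\<Prod>v\<in>I. (y v) ^ e v))" using assms(1) unfolding gpoly_def by blast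
  obtain E2 c2 where 2: "finite E2" "\<forall>e\<in>E2. (\<forall>v. v \<notin> I \<longrightarrow> e v = 0) \<and> Q (\<Sum>v\<in>I. e v)"
    "G = (\<lambda>y. \<Sum>e\<in>E2. c2 e * (\<Prod>v\<in>I. (y v) ^ e v))" using assms(2) unfolding gpoly_def by blast
  show ?thesis
  proof (rule gpoly_intro[where J="E1 \<times> E2" and \<epsilon>="\<lambda>(e1,e2) v. e1 v + e2 v" and c="\<lambda>(e1,e2). c1 e1 * c2 e2"])
    show "finite (E1 \<times> E2)" using 1 2 by simp
    show "\<forall>j\<in>E1 \<times> E2. (\<forall>v. v \<notin> I \<longrightarrow> (case j of (e1, e2) \<Rightarrow> \<lambda>v. e1 v + e2 v) v = 0) \<and>
        (\<exists>a b. P a \<and> Q b \<and> (\<Sum>v\<in>I. (case j of (e1, e2) \<Rightarrow> \<lambda>v. e1 v + e2 v) v) = a + b)"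
      using 1(2) 2(2) by (auto simp: sum.distrib)
    show "(\<lambda>y. F y * G y) = (\<lambda>y. \<Sum>j\<in>E1 \<times> E2. (case j of (e1, e2) \<Rightarrow> c1 e1 * c2 e2) *
          (\<Prod>v\<in>I. y v ^ (case j of (e1, e2) \<Rightarrow> \<lambda>v. e1 v + e2 v) v))"
      by (auto simp: 1(3) 2(3) sum_product sum.cartesian_product power_add prod.distrib
          intro!: sum.cong)
  qed
qed

lemma gpoly_cmult: "gpoly I P F \<Longrightarrow> gpoly I P (\<lambda>y. c * F y)"
  using gpoly_mult[OF gpoly_const[of I c]] by (rule gpoly_mono) auto

lemma gpoly_sum: "finite A \<Longrightarrow> (\<And>a. a \<in> A \<Longrightarrow> gpoly I P (F a)) \<Longrightarrow> gpoly I P (\<lambda>y. \<Sum>a\<in>A. F a y)"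
  by (induction A rule: finite_induct) (auto intro: gpoly_zero gpoly_add)

lemma gpoly_prod:
  assumes "finite A" "\<And>a. a \<in> A \<Longrightarrow> gpoly I (\<lambda>_. True) (F a)"
  shows "gpoly I (\<lambda>_. True) (\<lambda>y. \<Prod>a\<in>A. F a y)"
  using assms
proof (induction A rule: finite_induct)
  case empty
  then show ?case using gpoly_const[of I 1] by (auto elim: gpoly_mono)
next
  case (insert x A)
  have "gpoly I (\<lambda>k. \<exists>a b. True \<and> True \<and> k = a + b) (\<lambda>y. F x y * (\<Prod>a\<in>A. F a y))"
    by (rule gpoly_mult) (use insert in auto)
  then show ?case using insert by (auto elim: gpoly_mono)
qed

lemma gpoly_prod_homogeneous:
  assumes "finite A" "\<And>a. a \<in> A \<Longrightarrow> gpoly I (\<lambda>k. k = d a) (F a)"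
  shows "gpoly I (\<lambda>k. k = (\<Sum>a\<in>A. d a)) (\<lambda>y. \<Prod>a\<in>A. F a y)"
  using assms
proof (induction A rule: finite_induct)
  case empty
  then show ?case using gpoly_const[of I 1] by simp
next
  case (insert x A)
  have "gpoly I (\<lambda>k. \<exists>a b. a = d x \<and> b = (\<Sum>a\<in>A. d a) \<and> k = a + b) (\<lambda>y. F x y * (\<Prod>a\<in>A. F a y))"
    by (rule gpoly_mult) (use insert in auto)
  then show ?case using insert by (auto elim: gpoly_mono)
qed

lemma gpoly_power_homogeneous:
  "gpoly I (\<lambda>k. k = d) F \<Longrightarrow> gpoly I (\<lambda>k. k = n * d) (\<lambda>y. F y ^ n)"
  using gpoly_prod_homogeneous[of "{..<n}" I "\<lambda>_. d" "\<lambda>_. F"] by simp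

lemma gpoly_var_power: "finite I \<Longrightarrow> v \<in> I \<Longrightarrow> gpoly I (\<lambda>_. True) (\<lambda>y. y v ^ n)"
  using gpoly_power_homogeneous[OF gpoly_var, of I v n] by (auto elim: gpoly_mono)

lemma gpoly_holomorphic_on:
  assumes "gpoly I P F" "finite I" "\<And>v. v \<in> I \<Longrightarrow> (\<lambda>\<tau>. Y \<tau> v) holomorphic_on S"
  shows "(\<lambda>\<tau>. F (Y \<tau>)) holomorphic_on S"
proof -
  obtain E c where "finite E" "F = (\<lambda>y. \<Sum>e\<in>E. c e * (\<Prod>v\<in>I. (y v) ^ e v))"
    using assms(1) unfolding gpoly_def by blast
  then show ?thesis using assms(3) by (auto intro!: holomorphic_intros)
qed

lemma cpoly_continuous_on:
  assumes "cpoly f" "continuous_on S Y"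
  shows "continuous_on S (\<lambda>\<tau>. f (Y \<tau>))"
proof -
  obtain E c where "finite E" "f = (\<lambda>x. \<Sum>e\<in>E. c e * (\<Prod>l\<in>UNIV. (x $ l) ^ e l))"
    using assms(1) unfolding cpoly_def by blast
  then show ?thesis by (simp, intro continuous_intros assms(2))
qed

lemma cpoly_mult: "cpoly f \<Longrightarrow> cpoly g \<Longrightarrow> cpoly (\<lambda>x::complex^'n::finite. f x * g x)"
  unfolding cpoly_iff_gpoly by (drule (1) gpoly_mult) (erule gpoly_mono, simp)

lemma cpoly_sum:
  "finite A \<Longrightarrow> (\<And>a. a \<in> A \<Longrightarrow> cpoly (f a)) \<Longrightarrow> cpoly (\<lambda>x::complex^'n::finite. \<Sum>a\<in>A. f a x)"
  unfolding cpoly_iff_gpoly by (rule gpoly_sum)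

lemma cpoly_prod:
  "finite A \<Longrightarrow> (\<And>a. a \<in> A \<Longrightarrow> cpoly (f a)) \<Longrightarrow> cpoly (\<lambda>x::complex^'n::finite. \<Prod>a\<in>A. f a x)"
  unfolding cpoly_iff_gpoly by (rule gpoly_prod)

lemma cpoly_reindex:
  fixes g :: "'m::finite \<Rightarrow> 'n::finite"
  assumes "cpoly f"
  shows "cpoly (\<lambda>x. f (\<chi> l. x $ g l))"
proof -
  obtain E c where f: "finite E" "f = (\<lambda>x. \<Sum>e\<in>E. c e * (\<Prod>l\<in>UNIV. (x $ l) ^ e l))"
    using assms unfolding cpoly_def by blast
  have "gpoly UNIV (\<lambda>_. True) (\<lambda>y::'n \<Rightarrow> complex. \<Sum>e\<in>E. c e * (\<Prod>l\<in>UNIV. y (g l) ^ e l))"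
    by (intro gpoly_sum gpoly_cmult gpoly_prod gpoly_var_power f(1)) auto
  then show ?thesis unfolding cpoly_iff_gpoly by (simp add: f(2))
qed

lemma cpoly_vleft: "cpoly f \<Longrightarrow> cpoly (\<lambda>x::complex^('m::finite + 'n::finite). f (vleft x))"
  using cpoly_reindex[of f Inl] by (simp add: vleft_def)

lemma cpoly_vright: "cpoly f \<Longrightarrow> cpoly (\<lambda>x::complex^('m::finite + 'n::finite). f (vright x))"
  using cpoly_reindex[of f Inr] by (simp add: vright_def)

section \<open>Projective closures and the torus\<close>

lemma proj_closure_vanish:
  "y \<in> proj_closure I Y \<Longrightarrow> hpoly I F \<Longrightarrow> (\<And>z. z \<in> Y \<Longrightarrow> F z = 0) \<Longrightarrow> F y = 0"
  unfolding proj_closure_def by blast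

lemma subset_proj_closure: "Y \<subseteq> proj_pts I \<Longrightarrow> Y \<subseteq> proj_closure I Y"
  unfolding proj_closure_def by blast

lemma proj_closure_minimal: "Y \<subseteq> proj_closure I Z \<Longrightarrow> proj_closure I Y \<subseteq> proj_closure I Z"
  unfolding proj_closure_def by blast

definition hpoly_rep :: "'v set \<Rightarrow> ('v \<Rightarrow> nat) set \<Rightarrow> (('v \<Rightarrow> nat) \<Rightarrow> complex) \<Rightarrow> nat
    \<Rightarrow> (('v \<Rightarrow> complex) \<Rightarrow> complex) \<Rightarrow> bool" where
  "hpoly_rep I E c \<delta> F \<longleftrightarrow> finite E \<and> (\<forall>e\<in>E. (\<forall>v. v \<notin> I \<longrightarrow> e v = 0) \<and> (\<Sum>v\<in>I. e v) = \<delta>)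
     \<and> F = (\<lambda>y. \<Sum>e\<in>E. c e * (\<Prod>v\<in>I. (y v) ^ e v))"

lemma hpoly_iff_rep: "hpoly I F \<longleftrightarrow> (\<exists>E c \<delta>. hpoly_rep I E c \<delta> F)"
  unfolding hpoly_def hpoly_rep_def by blast

lemma proj_closure_product_vanish:
  assumes "\<And>Z. hpoly I (\<lambda>Y. H Y Z)" "\<And>Y. hpoly J (\<lambda>Z. H Y Z)"
    and "\<And>Y Z. Y \<in> A \<Longrightarrow> Z \<in> A' \<Longrightarrow> H Y Z = 0"
    and "Y \<in> proj_closure I A" "Z \<in> proj_closure J A'"
  shows "H Y Z = 0"
proof (rule proj_closure_vanish[OF assms(5) assms(2)])
  fix Z assume "Z \<in> A'"
  then show "H Y Z = 0" using proj_closure_vanish[OF assms(4) assms(1)] assms(3) by blast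
qed

text \<open>Along the one-parameter subgroup \<open>\<tau> \<mapsto> exp (\<tau> Ln t)\<close> through \<open>1\<close> and \<open>t\<close>, the function
  \<open>g\<close> has no zeros near \<open>\<tau> = 0\<close>; so \<open>f\<close> vanishes there, and at \<open>\<tau> = 1\<close> by analytic continuation.\<close>
lemma torus_zero_product_cancel:
  fixes f g :: "complex^'n::finite \<Rightarrow> complex"
  assumes holf: "\<And>v. (\<lambda>\<tau>. f (\<chi> l. exp (\<tau> * v$l))) holomorphic_on UNIV"
    and holg: "\<And>v. (\<lambda>\<tau>. g (\<chi> l. exp (\<tau> * v$l))) holomorphic_on UNIV"
    and zero: "\<And>t. (\<forall>l. t$l \<noteq> 0) \<Longrightarrow> f t * g t = 0"
    and g1: "g (\<chi> l. 1) \<noteq> 0"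
    and t: "\<forall>l. t$l \<noteq> 0"
  shows "f t = 0"
proof -
  define v where "v = (\<chi> l. Ln (t$l))"
  define \<phi> where "\<phi> = (\<lambda>\<tau>. f (\<chi> l. exp (\<tau> * v$l)))"
  define \<psi> where "\<psi> = (\<lambda>\<tau>. g (\<chi> l. exp (\<tau> * v$l)))"
  have "continuous (at 0) \<psi>"
    using holg[of v] unfolding \<psi>_def
    by (meson UNIV_I holomorphic_on_imp_continuous_on continuous_on_eq_continuous_at open_UNIV)
  moreover have "\<psi> 0 \<noteq> 0" using g1 by (simp add: \<psi>_def)
  ultimately obtain e where e: "e > 0" "\<And>y. dist 0 y < e \<Longrightarrow> \<psi> y \<noteq> 0"
    using continuous_at_avoid by blast
  have "\<phi> 1 = 0"
  proof (rule analytic_continuation[of \<phi> UNIV "ball 0 e" 0])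
    show "\<phi> holomorphic_on UNIV" using holf[of v] by (simp add: \<phi>_def)
    show "0 islimpt ball (0::complex) e" using e by (simp add: islimpt_ball)
    fix z assume "z \<in> ball (0::complex) e"
    then have "\<psi> z \<noteq> 0" using e by auto
    moreover have "\<phi> z * \<psi> z = 0" unfolding \<phi>_def \<psi>_def by (rule zero) simp
    ultimately show "\<phi> z = 0" by simp
  qed auto
  moreover have "(\<chi> l. exp (1 * v$l)) = t" using t by (simp add: v_def vec_eq_iff)
  ultimately show ?thesis by (simp add: \<phi>_def)
qed

definition laurent_mon :: "complex^'n::finite \<Rightarrow> int^'n \<Rightarrow> complex" where
  "laurent_mon u x = (\<Prod>l\<in>UNIV. (u$l) powi (x$l))"

lemma laurent_mon_nonzero: "\<forall>l. u$l \<noteq> 0 \<Longrightarrow> laurent_mon u x \<noteq> 0"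
  by (simp add: laurent_mon_def)

lemma laurent_mon_exp: "laurent_mon (\<chi> l. exp (f l)) x = exp (\<Sum>l\<in>UNIV. of_int (x$l) * f l)"
  by (simp add: laurent_mon_def exp_power_int exp_sum)

lemma laurent_mon_mult: "laurent_mon (\<chi> l. u$l * v$l) x = laurent_mon u x * laurent_mon v x"
  by (simp add: laurent_mon_def power_int_mult_distrib prod.distrib)

lemma laurent_mon_vjoin:
  "laurent_mon u (vjoin x y) = laurent_mon (vleft u) x * laurent_mon (vright u) y"
proof -
  have "(\<Prod>l\<in>(UNIV::('a + 'b) set). h l) = (\<Prod>l\<in>UNIV. h (Inl l)) * (\<Prod>l\<in>UNIV. h (Inr l))"
    for h :: "'a::finite + 'b::finite \<Rightarrow> complex"
    by (subst UNIV_Plus_UNIV[symmetric], subst prod.Plus) (auto simp: comp_def)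
  then show ?thesis by (simp add: laurent_mon_def vjoin_def vleft_def vright_def)
qed

definition torus_pt :: "(int^'n::finite) set \<Rightarrow> (int^'n \<Rightarrow> real) \<Rightarrow> complex^'n \<Rightarrow> (int^'n \<Rightarrow> complex)" where
  "torus_pt S w u = (\<lambda>x. if x \<in> S then complex_of_real (w x) * laurent_mon u x else 0)"

lemma toric_var_eq_closure_torus:
  "toric_var S w = proj_closure S {torus_pt S w u | u. \<forall>l. u$l \<noteq> 0}"
  unfolding toric_var_def torus_pt_def laurent_mon_def by simp

lemma torus_pt_in_proj_pts:
  assumes "finite S" "S \<noteq> {}" "\<forall>x\<in>S. w x > 0" "\<forall>l. u$l \<noteq> 0"
  shows "torus_pt S w u \<in> proj_pts S"
proof -
  obtain x where x: "x \<in> S" using assms(2) by blast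
  then have "w x > 0" using assms(3) by blast
  then have "torus_pt S w u x \<noteq> 0"
    using x assms(4) by (simp add: torus_pt_def laurent_mon_nonzero)
  then show ?thesis using x unfolding proj_pts_def torus_pt_def by auto
qed

lemma gpoly_torus_pt_holomorphic:
  assumes "gpoly S P F" "finite S"
  shows "(\<lambda>\<tau>. F (torus_pt S w (\<chi> l. exp (\<tau> * v$l)))) holomorphic_on UNIV"
  by (rule gpoly_holomorphic_on[OF assms])
     (simp add: torus_pt_def laurent_mon_exp, intro holomorphic_intros)

section \<open>Linear algebra\<close>

lemma rvec_inj: "rvec x = rvec y \<Longrightarrow> x = y"
  by (simp add: rvec_def vec_eq_iff)

definition dual_coord :: "nat \<Rightarrow> (nat \<Rightarrow> 'a::real_vector) \<Rightarrow> nat \<Rightarrow> 'a \<Rightarrow> real" where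
  "dual_coord r v j = (SOME g. linear g \<and> (\<forall>i<r. g (v i) = (if i = j then 1 else 0)))"

lemma
  assumes "independent (v ` {..<r})" "inj_on v {..<r}"
  shows linear_dual_coord: "linear (dual_coord r v j)"
    and dual_coord_apply: "i < r \<Longrightarrow> dual_coord r v j (v i) = (if i = j then 1 else 0)"
proof -
  have "\<exists>g. linear g \<and> (\<forall>x\<in>v ` {..<r}. g x = (if j < r \<and> x = v j then 1 else (0::real)))"
    by (rule linear_independent_extend[OF assms(1)])
  then obtain g where g: "linear g" "\<forall>x\<in>v ` {..<r}. g x = (if j < r \<and> x = v j then 1 else (0::real))"
    by blast
  have "g (v i) = (if i = j then 1 else 0)" if i: "i < r" for i
  proof -
    have "g (v i) = (if j < r \<and> v i = v j then 1 else 0)" using g(2) i by blast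
    moreover have "j < r \<Longrightarrow> v i = v j \<Longrightarrow> i = j" using assms(2) i unfolding inj_on_def by blast
    ultimately show ?thesis using i by auto
  qed
  then have "\<exists>g. linear g \<and> (\<forall>i<r. g (v i) = (if i = j then 1 else (0::real)))"
    using g(1) by blast
  from someI_ex[OF this] show "linear (dual_coord r v j)"
    and "i < r \<Longrightarrow> dual_coord r v j (v i) = (if i = j then 1 else 0)"
    unfolding dual_coord_def by auto
qed

lemma linear_sum_axis:
  fixes f :: "real^'n::finite \<Rightarrow> real"
  assumes "linear f"
  shows "f x = (\<Sum>l\<in>UNIV. x$l * f (axis l 1))"
proof -
  have "f x = f (\<Sum>l\<in>UNIV. (x$l) *\<^sub>R axis l 1)"
    using basis_expansion[of x] by (simp add: scalar_mult_eq_scaleR)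
  also have "\<dots> = (\<Sum>l\<in>UNIV. x$l * f (axis l 1))"
    using assms by (simp add: linear_sum linear_scale)
  finally show ?thesis .
qed

lemma map_matrix_of_int_rvec: "map_matrix real_of_int M *v rvec x = rvec (M *v x)"
  by (simp add: rvec_def vec_eq_iff matrix_vector_mult_def)

lemma complex_combination_coeff:
  fixes a :: "nat \<Rightarrow> int^'d::finite" and \<phi> :: "real^'d \<Rightarrow> real" and c :: "nat \<Rightarrow> complex"
  assumes lin: "linear \<phi>"
    and \<phi>a: "\<And>i. i < r \<Longrightarrow> \<phi> (rvec (a i)) = (if i = j then 1 else 0)"
    and comb: "\<And>m. (\<Sum>i<r. c i * of_int (a i $ m)) = complex_of_real (q $ m)"
    and j: "j < r"
  shows "c j = complex_of_real (\<phi> q)"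
proof -
  have Re: "(\<Sum>i<r. Re (c i) *\<^sub>R rvec (a i)) = q"
  proof (rule iffD2[OF vec_eq_iff], rule allI)
    fix m
    have "Re (\<Sum>i<r. c i * of_int (a i $ m)) = q $ m" using comb[of m] by simp
    then show "(\<Sum>i<r. Re (c i) *\<^sub>R rvec (a i)) $ m = q $ m" by (simp add: rvec_def)
  qed
  have Im: "(\<Sum>i<r. Im (c i) *\<^sub>R rvec (a i)) = 0"
  proof (rule iffD2[OF vec_eq_iff], rule allI)
    fix m
    have "Im (\<Sum>i<r. c i * of_int (a i $ m)) = 0" using comb[of m] by simp
    then show "(\<Sum>i<r. Im (c i) *\<^sub>R rvec (a i)) $ m = 0 $ m" by (simp add: rvec_def)
  qed
  have \<phi>_sum: "\<phi> (\<Sum>i<r. f i *\<^sub>R rvec (a i)) = f j" for f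
  proof -
    have "\<phi> (\<Sum>i<r. f i *\<^sub>R rvec (a i)) = (\<Sum>i<r. f i * \<phi> (rvec (a i)))"
      using lin by (simp add: linear_sum linear_scale)
    also have "\<dots> = f j" using j by (simp add: \<phi>a if_distrib cong: if_cong)
    finally show ?thesis .
  qed
  have "Re (c j) = \<phi> q" using \<phi>_sum[of "\<lambda>i. Re (c i)"] Re by simp
  moreover have "Im (c j) = 0" using \<phi>_sum[of "\<lambda>i. Im (c i)"] Im linear_0[OF lin] by simp
  ultimately show ?thesis by (simp add: complex_eq_iff)
qed

lemma block_weight_eq_coordinate:
  fixes S :: "(int^'e::finite) set" and blk :: "nat \<Rightarrow> (int^'e) set" and M :: "int^'e^'d::finite"
    and a :: "nat \<Rightarrow> int^'d" and \<phi> :: "real^'d \<Rightarrow> real" and \<omega> :: "int^'e \<Rightarrow> complex"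
  assumes fin: "finite S" and S: "S = (\<Union>i<r. blk i)"
    and disj: "\<And>i i'. i < r \<Longrightarrow> i' < r \<Longrightarrow> i \<noteq> i' \<Longrightarrow> blk i \<inter> blk i' = {}"
    and Ma: "\<And>i x. i < r \<Longrightarrow> x \<in> blk i \<Longrightarrow> M *v x = a i"
    and lin: "linear \<phi>"
    and \<phi>a: "\<And>i. i < r \<Longrightarrow> \<phi> (rvec (a i)) = (if i = j then 1 else 0)"
    and bary: "\<And>l. (\<Sum>x\<in>S. \<omega> x * of_int (x$l)) = complex_of_real (p$l)"
    and j: "j < r"
  shows "(\<Sum>x\<in>blk j. \<omega> x) = complex_of_real (\<phi> (map_matrix real_of_int M *v p))"
proof (rule complex_combination_coeff[OF lin \<phi>a _ j])
  fix m
  have finb: "finite (blk i)" if "i < r" for i using fin S that by auto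
  have "complex_of_real ((map_matrix real_of_int M *v p) $ m)
      = (\<Sum>l\<in>UNIV. of_int (M$m$l) * (\<Sum>x\<in>S. \<omega> x * of_int (x$l)))"
    by (simp add: matrix_vector_mult_def bary)
  also have "\<dots> = (\<Sum>x\<in>S. \<omega> x * of_int ((M *v x) $ m))"
    by (simp add: matrix_vector_mult_def sum_distrib_left sum_distrib_right algebra_simps
        sum.swap[of _ UNIV S])
  also have "\<dots> = (\<Sum>i<r. \<Sum>x\<in>blk i. \<omega> x * of_int ((M *v x) $ m))"
    unfolding S by (rule sum.UNION_disjoint) (use finb disj in auto)
  also have "\<dots> = (\<Sum>i<r. (\<Sum>x\<in>blk i. \<omega> x) * of_int (a i $ m))"
    by (auto simp: Ma sum_distrib_right intro!: sum.cong)
  finally show "(\<Sum>i<r. (\<Sum>x\<in>blk i. \<omega> x) * of_int (a i $ m))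
      = complex_of_real ((map_matrix real_of_int M *v p) $ m)" by simp
qed

lemma ratfun_sum_eq_linear_extend:
  fixes T :: "(int^'e::finite) set" and \<gamma> :: "int^'e \<Rightarrow> 'e ratfun" and K :: "(real^'e) set"
    and \<psi> :: "real^'e \<Rightarrow> real"
  assumes cvx: "convex K" and pK: "p \<in> K" and fin: "finite T"
    and rat: "\<And>x. x \<in> T \<Longrightarrow> is_ratfun (\<gamma> x)"
    and def: "\<And>x. x \<in> T \<Longrightarrow> rf_defined (\<gamma> x) (cvec p)"
    and ri: "\<And>q. q \<in> rel_interior K \<Longrightarrow> (\<Sum>x\<in>T. rf_eval (\<gamma> x) (cvec q)) = complex_of_real (\<psi> q)"
    and lin: "linear \<psi>"
  shows "(\<Sum>x\<in>T. rf_eval (\<gamma> x) (cvec p)) = complex_of_real (\<psi> p)"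
proof -
  obtain p0 where p0: "p0 \<in> rel_interior K" using pK rel_interior_eq_empty[OF cvx] by blast
  define pt where "pt \<tau> = p - \<tau> *\<^sub>R (p - p0)" for \<tau> :: real
  define g where "g \<tau> = (\<Sum>x\<in>T. fst (\<gamma> x) (cvec (pt \<tau>)) / snd (\<gamma> x) (cvec (pt \<tau>)))
      - complex_of_real (\<psi> (pt \<tau>))" for \<tau>
  have cont_pt: "continuous_on UNIV (\<lambda>\<tau>. cvec (pt \<tau>))"
    unfolding cvec_def pt_def by (intro continuous_intros)
  have "isCont (\<lambda>\<tau>. fst (\<gamma> x) (cvec (pt \<tau>)) / snd (\<gamma> x) (cvec (pt \<tau>))) 0" if x: "x \<in> T" for x
    using rat[OF x] def[OF x] cpoly_continuous_on[OF _ cont_pt]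
    by (intro isCont_divide) (auto simp: is_ratfun_def rf_defined_def pt_def continuous_on_eq_continuous_at)
  moreover have "continuous_on UNIV (\<lambda>\<tau>. complex_of_real (\<psi> (pt \<tau>)))"
    unfolding pt_def by (intro continuous_intros linear_continuous_on_compose[OF _ lin])
  then have "isCont (\<lambda>\<tau>. complex_of_real (\<psi> (pt \<tau>))) 0"
    by (simp add: continuous_on_eq_continuous_at)
  ultimately have "isCont g 0"
    unfolding g_def by (intro continuous_diff continuous_sum) auto
  then have lim: "(g \<longlongrightarrow> g 0) (at_right 0)"
    by (simp add: isCont_def filterlim_at_split)
  have "eventually (\<lambda>\<tau>. \<tau> \<in> {0<..<1::real}) (at_right 0)"
    by (rule eventually_at_right_real) simp
  then have "eventually (\<lambda>\<tau>. g \<tau> = 0) (at_right 0)"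
  proof (rule eventually_mono)
    fix \<tau> :: real assume "\<tau> \<in> {0<..<1}"
    then have "pt \<tau> \<in> rel_interior K" unfolding pt_def
      by (intro rel_interior_convex_shrink[OF cvx p0 pK]) auto
    from ri[OF this] show "g \<tau> = 0" by (simp add: g_def rf_eval_def)
  qed
  then have "g 0 = 0" using tendsto_unique[OF _ lim tendsto_eventually] by simp
  then show ?thesis by (simp add: g_def pt_def rf_eval_def)
qed

lemma sum_sum_div_sum:
  fixes f g h :: "_ \<Rightarrow> 'a::field"
  assumes "sum f X = L" "L \<noteq> 0"
  shows "(\<Sum>x\<in>X. \<Sum>y\<in>Y. f x * g y / L * h y) = (\<Sum>y\<in>Y. g y * h y)"
proof -
  have "(\<Sum>x\<in>X. \<Sum>y\<in>Y. f x * g y / L * h y) = (\<Sum>x\<in>X. f x / L * (\<Sum>y\<in>Y. g y * h y))"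
    by (simp add: sum_distrib_left mult.assoc)
  also have "\<dots> = sum f X / L * (\<Sum>y\<in>Y. g y * h y)"
    by (simp add: sum_distrib_right sum_divide_distrib)
  finally show ?thesis using assms by simp
qed

lemma sum_sum_div_sum':
  fixes f g h :: "_ \<Rightarrow> 'a::field"
  assumes "sum g Y = L" "L \<noteq> 0"
  shows "(\<Sum>x\<in>X. \<Sum>y\<in>Y. f x * g y / L * h x) = (\<Sum>x\<in>X. f x * h x)"
proof -
  have "(\<Sum>x\<in>X. \<Sum>y\<in>Y. f x * g y / L * h x) = (\<Sum>y\<in>Y. \<Sum>x\<in>X. g y * f x / L * h x)"
    by (subst sum.swap) (simp add: mult.commute)
  also have "\<dots> = (\<Sum>x\<in>X. f x * h x)" by (rule sum_sum_div_sum[OF assms])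
  finally show ?thesis .
qed

section \<open>Configurations fibred over \<open>A\<close>\<close>

locale fibred_configuration =
  fixes r :: nat and s :: "nat \<Rightarrow> nat"
    and a :: "nat \<Rightarrow> int^'d::finite"
    and b :: "nat \<Rightarrow> nat \<Rightarrow> int^'n::finite"
    and \<pi> :: "int^'n^'d"
    and w :: "int^'n \<Rightarrow> real"
    and \<beta> :: "int^'n \<Rightarrow> 'n ratfun"
    and S :: "(int^'n) set"
  assumes s_pos: "\<forall>i<r. s i \<ge> 1"
    and a_inj: "inj_on a {..<r}"
    and a_indep: "independent ((\<lambda>i. rvec (a i)) ` {..<r})"
    and S_def: "S = {b i j | i j. i < r \<and> j < s i}"
    and \<pi>_b: "\<forall>i<r. \<forall>j<s i. \<pi> *v b i j = a i"
    and w_pos: "\<forall>x\<in>S. w x > 0"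
    and \<beta>: "blending_functions S w \<beta>"
begin

definition "blk i = {b i j | j. j < s i}"
definition "conv_S = convex hull (rvec ` S)"
definition "\<psi> j p = dual_coord r (\<lambda>i. rvec (a i)) j (map_matrix real_of_int \<pi> *v p)"
definition "bsum i p = (\<Sum>x\<in>blk i. rf_eval (\<beta> x) p)"
text \<open>\<open>bsum i\<close> is the fibre sum \<open>\<lambda>\<^sub>i\<close>, and \<open>\<psi> i p\<close> the \<open>i\<close>-th coordinate of \<open>\<pi> p\<close> in the
  basis \<open>a\<close>; the two agree on \<open>conv_S\<close> (\<open>bsum_eq_\<psi>\<close>).\<close>

lemma blk_subset: "i < r \<Longrightarrow> blk i \<subseteq> S"
  unfolding blk_def S_def by blast

lemma S_eq_UN_blk: "S = (\<Union>i<r. blk i)"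
  unfolding blk_def S_def by blast

lemma finite_blk: "finite (blk i)"
  unfolding blk_def by simp

lemma finite_S: "finite S"
  using S_eq_UN_blk finite_blk by simp

lemma b0_in_blk: "i < r \<Longrightarrow> b i 0 \<in> blk i"
  unfolding blk_def using s_pos by force

lemma \<pi>_blk: "i < r \<Longrightarrow> x \<in> blk i \<Longrightarrow> \<pi> *v x = a i"
  unfolding blk_def using \<pi>_b by blast

lemma blk_disjoint: "i < r \<Longrightarrow> i' < r \<Longrightarrow> i \<noteq> i' \<Longrightarrow> blk i \<inter> blk i' = {}"
  using \<pi>_blk[of i] \<pi>_blk[of i'] a_inj unfolding inj_on_def by (metis disjoint_iff lessThan_iff)

lemma blk_unique: "i < r \<Longrightarrow> i' < r \<Longrightarrow> x \<in> blk i \<Longrightarrow> x \<in> blk i' \<Longrightarrow> i = i'"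
  using blk_disjoint by blast

lemma sum_S_blocks: "(\<Sum>x\<in>S. f x) = (\<Sum>i<r. \<Sum>x\<in>blk i. f x)"
  unfolding S_eq_UN_blk by (rule sum.UNION_disjoint) (use finite_blk blk_disjoint in auto)

lemma r_pos: "r > 0"
proof (rule ccontr)
  assume "\<not> r > 0"
  then have "S = {}" using S_def by auto
  then show False using \<beta> unfolding blending_functions_def by auto
qed

lemma S_nonempty: "S \<noteq> {}"
  using r_pos b0_in_blk blk_subset by blast

lemma
  shows is_ratfun_\<beta>: "x \<in> S \<Longrightarrow> is_ratfun (\<beta> x)"
    and sum_\<beta>_eq_1: "(\<forall>x\<in>S. rf_defined (\<beta> x) p) \<Longrightarrow> (\<Sum>x\<in>S. rf_eval (\<beta> x) p) = 1"
    and \<beta>_relint: "q \<in> rel_interior conv_S \<Longrightarrow> x \<in> S \<Longrightarrow>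
      rf_defined (\<beta> x) (cvec q) \<and> (\<exists>u::real. u \<ge> 0 \<and> rf_eval (\<beta> x) (cvec q) = complex_of_real u)"
    and \<beta>_linear_precision: "q \<in> conv_S \<Longrightarrow> (\<forall>x\<in>S. rf_defined (\<beta> x) (cvec q)) \<Longrightarrow>
      (\<Sum>x\<in>S. rf_eval (\<beta> x) (cvec q) * of_int (x $ l)) = complex_of_real (q $ l)"
  using \<beta> unfolding blending_functions_def conv_S_def by (auto simp: cvec_def)

lemma dual_coord_a: "i < r \<Longrightarrow> dual_coord r (\<lambda>i. rvec (a i)) j (rvec (a i)) = (if i = j then 1 else 0)"
  using dual_coord_apply[OF a_indep] a_inj rvec_inj unfolding inj_on_def by blast

lemma linear_dual_coord_a: "linear (dual_coord r (\<lambda>i. rvec (a i)) j)"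
  using linear_dual_coord[OF a_indep] a_inj rvec_inj unfolding inj_on_def by blast

lemma linear_\<psi>: "linear (\<psi> j)"
  using linear_compose[OF matrix_vector_mul_linear linear_dual_coord_a]
  unfolding \<psi>_def[abs_def] o_def .

lemma \<psi>_blk: "i < r \<Longrightarrow> x \<in> blk i \<Longrightarrow> \<psi> j (rvec x) = (if i = j then 1 else 0)"
  by (simp add: \<psi>_def map_matrix_of_int_rvec \<pi>_blk dual_coord_a)

lemma \<psi>_nonneg: "p \<in> conv_S \<Longrightarrow> \<psi> j p \<ge> 0"
proof -
  have "conv_S \<subseteq> {p. \<psi> j p \<ge> 0}"
    unfolding conv_S_def
  proof (rule hull_minimal)
    show "rvec ` S \<subseteq> {p. \<psi> j p \<ge> 0}"
      using \<psi>_blk S_eq_UN_blk by auto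
    show "convex {p. \<psi> j p \<ge> 0}"
      using convex_linear_vimage[OF linear_\<psi>, of "{0..}"] by (simp add: vimage_def)
  qed
  then show "p \<in> conv_S \<Longrightarrow> \<psi> j p \<ge> 0" by blast
qed

text \<open>A point of the relative interior can be pushed slightly beyond itself away from the
  vertex \<open>b j 0\<close>, where \<open>\<psi> j\<close> equals 1; this would make \<open>\<psi> j\<close> negative if it vanished.\<close>
lemma \<psi>_pos:
  assumes p: "p \<in> rel_interior conv_S" and j: "j < r"
  shows "\<psi> j p > 0"
proof (rule ccontr)
  assume "\<not> \<psi> j p > 0"
  moreover have "\<psi> j p \<ge> 0" using \<psi>_nonneg p rel_interior_subset by blast
  ultimately have 0: "\<psi> j p = 0" by simp
  have "rvec (b j 0) \<in> conv_S"
    unfolding conv_S_def using b0_in_blk[OF j] blk_subset[OF j] by (meson hull_inc image_eqI subsetD)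
  then have "rvec (b j 0) \<in> affine hull conv_S" by (simp add: hull_inc)
  then obtain m where m: "m > 1" "(1 - m) *\<^sub>R rvec (b j 0) + m *\<^sub>R p \<in> conv_S"
    using convex_rel_interior_if[of conv_S p] p unfolding conv_S_def by auto
  then have "\<psi> j ((1 - m) *\<^sub>R rvec (b j 0) + m *\<^sub>R p) \<ge> 0" using \<psi>_nonneg by blast
  moreover have "\<psi> j ((1 - m) *\<^sub>R rvec (b j 0) + m *\<^sub>R p) = 1 - m"
    using linear_\<psi>[of j] \<psi>_blk[OF j b0_in_blk[OF j], of j] 0 by (simp add: linear_add linear_scale)
  ultimately show False using m by simp
qed

lemma bsum_eq_\<psi>_all_defined:
  assumes "p \<in> conv_S" "\<forall>x\<in>S. rf_defined (\<beta> x) (cvec p)" "j < r"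
  shows "bsum j (cvec p) = complex_of_real (\<psi> j p)"
  unfolding bsum_def \<psi>_def
  by (rule block_weight_eq_coordinate[where a=a])
     (use finite_S S_eq_UN_blk blk_disjoint \<pi>_blk linear_dual_coord_a dual_coord_a
        \<beta>_linear_precision[OF assms(1,2)] assms(3) in auto)

lemma bsum_eq_\<psi>:
  assumes p: "p \<in> conv_S" and j: "j < r" and def: "\<forall>x\<in>blk j. rf_defined (\<beta> x) (cvec p)"
  shows "bsum j (cvec p) = complex_of_real (\<psi> j p)"
  unfolding bsum_def
proof (rule ratfun_sum_eq_linear_extend[OF _ p finite_blk _ _ _ linear_\<psi>])
  show "convex conv_S" unfolding conv_S_def by (rule convex_convex_hull)
  fix q assume q: "q \<in> rel_interior conv_S"
  then have "\<forall>x\<in>S. rf_defined (\<beta> x) (cvec q)" using \<beta>_relint by blast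
  then show "(\<Sum>x\<in>blk j. rf_eval (\<beta> x) (cvec q)) = complex_of_real (\<psi> j q)"
    using bsum_eq_\<psi>_all_defined[OF _ _ j] q rel_interior_subset unfolding bsum_def by blast
qed (use def is_ratfun_\<beta> blk_subset[OF j] in auto)

definition "den p = (\<Prod>x\<in>S. snd (\<beta> x) p)"
definition "bnum i p = (\<Sum>x\<in>blk i. fst (\<beta> x) p * (\<Prod>x'\<in>S - {x}. snd (\<beta> x') p))"
definition "param p = (\<lambda>x. if x \<in> S then rf_eval (\<beta> x) p else 0)"
definition "param_image = {param p | p. den p \<noteq> 0}"
definition "ysum i (Y :: int^'n \<Rightarrow> complex) = (\<Sum>x\<in>blk i. Y x)"
definition "yprod Y = (\<Prod>i<r. ysum i Y)"
definition "torus_image = {torus_pt S w u | u. \<forall>l. u$l \<noteq> 0}"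

lemma den_nonzero_iff: "den p \<noteq> 0 \<longleftrightarrow> (\<forall>x\<in>S. rf_defined (\<beta> x) p)"
  unfolding den_def rf_defined_def using finite_S by simp

lemma den_nonzero_snd: "den p \<noteq> 0 \<Longrightarrow> x \<in> S \<Longrightarrow> snd (\<beta> x) p \<noteq> 0"
  using den_nonzero_iff rf_defined_def by blast

lemma prod_snd_remove:
  "x \<in> S \<Longrightarrow> den p \<noteq> 0 \<Longrightarrow> (\<Prod>x'\<in>S - {x}. snd (\<beta> x') p) = den p / snd (\<beta> x) p"
  unfolding den_def using finite_S by (simp add: prod.remove)

lemma cpoly_\<beta>: "x \<in> S \<Longrightarrow> cpoly (fst (\<beta> x))" "x \<in> S \<Longrightarrow> cpoly (snd (\<beta> x))"
  using is_ratfun_\<beta> unfolding is_ratfun_def by blast+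

lemma cpoly_den: "cpoly den"
  unfolding den_def[abs_def] by (intro cpoly_prod finite_S cpoly_\<beta>)

lemma cpoly_bnum: "i < r \<Longrightarrow> cpoly (bnum i)"
  unfolding bnum_def[abs_def] using blk_subset
  by (intro cpoly_sum cpoly_mult cpoly_prod finite_blk finite_Diff finite_S cpoly_\<beta>) auto

lemma bnum_eq: assumes "den p \<noteq> 0" "i < r" shows "bnum i p = den p * bsum i p"
proof -
  have "bnum i p = (\<Sum>x\<in>blk i. den p * rf_eval (\<beta> x) p)"
    unfolding bnum_def using blk_subset[OF assms(2)] den_nonzero_snd[OF assms(1)]
    by (intro sum.cong refl) (auto simp: prod_snd_remove[OF _ assms(1)] rf_eval_def)
  then show ?thesis by (simp add: bsum_def sum_distrib_left)
qed

lemma param_image_eq: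
  "param_image = {(\<lambda>x. if x \<in> S then rf_eval (\<beta> x) p else 0) | p. \<forall>x\<in>S. rf_defined (\<beta> x) p}"
  unfolding param_image_def param_def den_nonzero_iff ..

lemma param_image_subset: "param_image \<subseteq> toric_var S w"
  and proj_closure_param_image: "proj_closure S param_image = toric_var S w"
  using \<beta> unfolding blending_functions_def Let_def param_image_eq by blast+

lemma ysum_param: "i < r \<Longrightarrow> ysum i (param p) = bsum i p"
  unfolding ysum_def param_def bsum_def using blk_subset by (intro sum.cong) auto

lemma yprod_nonzero_iff: "yprod Y \<noteq> 0 \<longleftrightarrow> (\<forall>i<r. ysum i Y \<noteq> 0)"
  unfolding yprod_def by auto

lemma gpoly_ysum: "i < r \<Longrightarrow> gpoly S (\<lambda>k. k = 1) (ysum i)"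
  unfolding ysum_def[abs_def] using blk_subset
  by (intro gpoly_sum[OF finite_blk] gpoly_var[OF finite_S]) blast

lemma gpoly_yprod: "gpoly S (\<lambda>k. k = r) yprod"
  using gpoly_prod_homogeneous[of "{..<r}" S "\<lambda>_. 1" ysum] gpoly_ysum
  by (simp add: yprod_def[abs_def])

lemma yprod_torus_one: "yprod (torus_pt S w (\<chi> l. 1)) \<noteq> 0"
  unfolding yprod_nonzero_iff
proof (intro allI impI)
  fix i assume i: "i < r"
  have "ysum i (torus_pt S w (\<chi> l. 1)) = complex_of_real (\<Sum>x\<in>blk i. w x)"
    unfolding ysum_def torus_pt_def of_real_sum using blk_subset[OF i]
    by (intro sum.cong refl) (auto simp: laurent_mon_def)
  moreover have "(\<Sum>x\<in>blk i. w x) > 0"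
    using b0_in_blk[OF i] blk_subset[OF i] w_pos finite_blk by (intro sum_pos) auto
  ultimately show "ysum i (torus_pt S w (\<chi> l. 1)) \<noteq> 0"
    by (metis of_real_eq_0_iff less_irrefl)
qed

lemma toric_var_eq_closure_torus_image: "toric_var S w = proj_closure S torus_image"
  unfolding torus_image_def by (rule toric_var_eq_closure_torus)

lemma torus_image_subset: "torus_image \<subseteq> toric_var S w"
  unfolding toric_var_eq_closure_torus_image
  by (rule subset_proj_closure)
     (use torus_pt_in_proj_pts[OF finite_S S_nonempty w_pos] in \<open>auto simp: torus_image_def\<close>)

text \<open>Torus points can be rescaled independently on the fibres: the linear functionals
  \<open>\<psi> j\<close> separate the fibres, so \<open>exp (\<Sum>\<^sub>j Ln (\<mu> j) \<psi> j)\<close> is a character that is constant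
  \<open>\<mu> i\<close> on the \<open>i\<close>-th fibre.\<close>
lemma torus_rescale_fibres:
  assumes \<mu>: "\<forall>i<r. \<mu> i \<noteq> 0" and u: "\<forall>l. u$l \<noteq> 0"
  shows "\<exists>u'. (\<forall>l. u'$l \<noteq> 0) \<and> (\<forall>i<r. \<forall>y\<in>blk i. laurent_mon u' y = \<mu> i * laurent_mon u y)"
proof -
  define \<kappa> where "\<kappa> l = (\<Sum>j<r. Ln (\<mu> j) * complex_of_real (\<psi> j (axis l 1)))" for l
  define u' where "u' = (\<chi> l. u$l * (\<chi> l. exp (\<kappa> l))$l)"
  have "laurent_mon u' y = \<mu> i * laurent_mon u y" if i: "i < r" and y: "y \<in> blk i" for i y
  proof -
    have "(\<Sum>l\<in>UNIV. of_int (y$l) * \<kappa> l)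
        = (\<Sum>j<r. Ln (\<mu> j) * complex_of_real (\<Sum>l\<in>UNIV. rvec y $ l * \<psi> j (axis l 1)))"
      unfolding \<kappa>_def
      by (simp add: rvec_def sum_distrib_left sum_distrib_right mult_ac sum.swap[of _ UNIV])
    also have "\<dots> = (\<Sum>j<r. Ln (\<mu> j) * complex_of_real (\<psi> j (rvec y)))"
      by (simp add: linear_sum_axis[OF linear_\<psi>, symmetric])
    also have "\<dots> = Ln (\<mu> i)"
      using i y by (simp add: \<psi>_blk if_distrib cong: if_cong)
    finally have "laurent_mon (\<chi> l. exp (\<kappa> l)) y = \<mu> i"
      using \<mu> i by (simp add: laurent_mon_exp)
    then show ?thesis unfolding u'_def laurent_mon_mult by simp
  qed
  moreover have "\<forall>l. u'$l \<noteq> 0" using u by (simp add: u'_def)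
  ultimately show ?thesis by blast
qed

end

section \<open>The toric fiber product\<close>

lemma vleft_vjoin [simp]: "vleft (vjoin x y) = x"
  by (simp add: vleft_def vjoin_def)

lemma vright_vjoin [simp]: "vright (vjoin x y) = y"
  by (simp add: vright_def vjoin_def)

lemma vjoin_vleft_vright [simp]: "vjoin (vleft m) (vright m) = m"
  by (simp add: vleft_def vright_def vjoin_def vec_eq_iff split: sum.split)

lemma vjoin_eq_iff [simp]: "vjoin x y = vjoin x' y' \<longleftrightarrow> x = x' \<and> y = y'"
  by (metis vleft_vjoin vright_vjoin)

lemma vjoin_nth_Inl [simp]: "vjoin x y $ Inl l = x $ l"
  by (simp add: vjoin_def)

lemma vjoin_nth_Inr [simp]: "vjoin x y $ Inr l = y $ l"
  by (simp add: vjoin_def)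

lemma vleft_rvec: "vleft (rvec m) = rvec (vleft m)"
  and vright_rvec: "vright (rvec m) = rvec (vright m)"
  and vleft_cvec: "vleft (cvec z) = cvec (vleft z)"
  and vright_cvec: "vright (cvec z) = cvec (vright z)"
  by (simp_all add: vleft_def vright_def rvec_def cvec_def)

lemma linear_vleft: "linear (vleft :: real^('a::finite + 'b::finite) \<Rightarrow> real^'a)"
  and linear_vright: "linear (vright :: real^('a::finite + 'b::finite) \<Rightarrow> real^'b)"
  by (auto intro!: linearI simp: vleft_def vright_def vec_eq_iff)

locale toric_fiber_product_setting =
  B: fibred_configuration r s a b \<pi>1 w \<beta> B + C: fibred_configuration r t a c \<pi>2 w' \<beta>' C
  for r :: nat and s t :: "nat \<Rightarrow> nat" and a :: "nat \<Rightarrow> int^'d::finite"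
    and b :: "nat \<Rightarrow> nat \<Rightarrow> int^'d1::finite" and c :: "nat \<Rightarrow> nat \<Rightarrow> int^'d2::finite"
    and \<pi>1 :: "int^'d1^'d" and \<pi>2 :: "int^'d2^'d"
    and w :: "int^'d1 \<Rightarrow> real" and w' :: "int^'d2 \<Rightarrow> real"
    and \<beta> :: "int^'d1 \<Rightarrow> 'd1 ratfun" and \<beta>' :: "int^'d2 \<Rightarrow> 'd2 ratfun"
    and B :: "(int^'d1) set" and C :: "(int^'d2) set"
begin

definition "BC = toric_fiber_product r s t b c"
definition "BCi i = (\<lambda>(x, y). vjoin x y) ` (B.blk i \<times> C.blk i)"
definition "fibre m = (THE i. i < r \<and> vleft m \<in> B.blk i)"
definition "wBC m = w (vleft m) * w' (vright m)"
definition "conv_BC = convex hull (rvec ` BC)"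

lemma BC_eq_UN: "BC = (\<Union>i<r. BCi i)"
  unfolding BC_def toric_fiber_product_def BCi_def B.blk_def C.blk_def by auto

lemma finite_BCi: "finite (BCi i)"
  unfolding BCi_def using B.finite_blk C.finite_blk by simp

lemma finite_BC: "finite BC"
  using BC_eq_UN finite_BCi by simp

lemma BCi_disjoint: "i < r \<Longrightarrow> i' < r \<Longrightarrow> i \<noteq> i' \<Longrightarrow> BCi i \<inter> BCi i' = {}"
  unfolding BCi_def using B.blk_disjoint by fastforce

lemma vjoin_in_BC: "i < r \<Longrightarrow> x \<in> B.blk i \<Longrightarrow> y \<in> C.blk i \<Longrightarrow> vjoin x y \<in> BC"
  unfolding BC_eq_UN BCi_def by blast

lemma BC_memE:
  assumes "m \<in> BC"
  obtains i where "i < r" "vleft m \<in> B.blk i" "vright m \<in> C.blk i"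
  using assms unfolding BC_eq_UN BCi_def by auto

lemma vleft_in_B: "m \<in> BC \<Longrightarrow> vleft m \<in> B"
  and vright_in_C: "m \<in> BC \<Longrightarrow> vright m \<in> C"
  using B.blk_subset C.blk_subset by (metis BC_memE subsetD)+

lemma fibre_eq: "i < r \<Longrightarrow> vleft m \<in> B.blk i \<Longrightarrow> fibre m = i"
  unfolding fibre_def using B.blk_unique by (rule the_equality[rotated]) blast+

lemma sum_BC_blocks: "(\<Sum>m\<in>BC. f m) = (\<Sum>i<r. \<Sum>m\<in>BCi i. f m)"
  and prod_BC_blocks: "(\<Prod>m\<in>BC. g m) = (\<Prod>i<r. \<Prod>m\<in>BCi i. g m)"
  unfolding BC_eq_UN
  by (rule sum.UNION_disjoint prod.UNION_disjoint; use finite_BCi BCi_disjoint in auto)+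

lemma sum_BC: "(\<Sum>m\<in>BC. f m) = (\<Sum>i<r. \<Sum>x\<in>B.blk i. \<Sum>y\<in>C.blk i. f (vjoin x y))"
proof -
  have "(\<Sum>m\<in>BCi i. f m) = (\<Sum>x\<in>B.blk i. \<Sum>y\<in>C.blk i. f (vjoin x y))" for i
    unfolding BCi_def
    by (subst sum.reindex) (auto simp: inj_on_def case_prod_beta sum.cartesian_product)
  then show ?thesis by (simp add: sum_BC_blocks)
qed

lemma vleft_image_BC: "vleft ` BC = B"
proof
  show "vleft ` BC \<subseteq> B" using vleft_in_B by blast
  show "B \<subseteq> vleft ` BC"
  proof
    fix x assume "x \<in> B"
    then obtain i where "i < r" "x \<in> B.blk i" using B.S_eq_UN_blk by blast
    then have "vjoin x (c i 0) \<in> BC" using vjoin_in_BC C.b0_in_blk by blast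
    then show "x \<in> vleft ` BC" by force
  qed
qed

lemma vright_image_BC: "vright ` BC = C"
proof
  show "vright ` BC \<subseteq> C" using vright_in_C by blast
  show "C \<subseteq> vright ` BC"
  proof
    fix y assume "y \<in> C"
    then obtain i where "i < r" "y \<in> C.blk i" using C.S_eq_UN_blk by blast
    then have "vjoin (b i 0) y \<in> BC" using vjoin_in_BC B.b0_in_blk by blast
    then show "y \<in> vright ` BC" by force
  qed
qed

lemma BC_nonempty: "BC \<noteq> {}"
  using vleft_image_BC B.S_nonempty by blast

lemma vleft_conv_BC: "vleft ` conv_BC = B.conv_S"
  and vright_conv_BC: "vright ` conv_BC = C.conv_S"
  unfolding conv_BC_def B.conv_S_def C.conv_S_def
    convex_hull_linear_image[OF linear_vleft] convex_hull_linear_image[OF linear_vright]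
  by (simp_all add: image_image vleft_rvec vright_rvec flip: vleft_image_BC vright_image_BC)

lemma vleft_rel_interior: "z \<in> rel_interior conv_BC \<Longrightarrow> vleft z \<in> rel_interior B.conv_S"
  and vright_rel_interior: "z \<in> rel_interior conv_BC \<Longrightarrow> vright z \<in> rel_interior C.conv_S"
  using rel_interior_convex_linear_image[OF linear_vleft, of conv_BC]
    rel_interior_convex_linear_image[OF linear_vright, of conv_BC] vleft_conv_BC vright_conv_BC
  unfolding conv_BC_def by auto

lemma \<psi>_agree:
  assumes "z \<in> conv_BC"
  shows "B.\<psi> i (vleft z) = C.\<psi> i (vright z)"
proof -
  define h where "h z = map_matrix real_of_int \<pi>1 *v vleft z - map_matrix real_of_int \<pi>2 *v vright z" for z
  have "linear h"
    unfolding h_def[abs_def]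
    by (intro linear_compose_sub linear_compose[OF linear_vleft matrix_vector_mul_linear, unfolded o_def]
        linear_compose[OF linear_vright matrix_vector_mul_linear, unfolded o_def])
  then have "convex {z. h z = 0}"
    using convex_linear_vimage[of h "{0}"] by (simp add: vimage_def)
  moreover have "rvec ` BC \<subseteq> {z. h z = 0}"
    by (auto elim!: BC_memE simp: h_def vleft_rvec vright_rvec map_matrix_of_int_rvec B.\<pi>_blk C.\<pi>_blk)
  ultimately have "conv_BC \<subseteq> {z. h z = 0}"
    unfolding conv_BC_def by (rule hull_minimal[rotated])
  then show ?thesis using assms by (auto simp: h_def B.\<psi>_def C.\<psi>_def)
qed

lemma bsum_agree:
  assumes z: "z \<in> conv_BC" and i: "i < r"
    and "\<forall>x\<in>B.blk i. rf_defined (\<beta> x) (cvec (vleft z))"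
    and "\<forall>y\<in>C.blk i. rf_defined (\<beta>' y) (cvec (vright z))"
  shows "B.bsum i (cvec (vleft z)) = C.bsum i (cvec (vright z))"
proof -
  have "vleft z \<in> B.conv_S" "vright z \<in> C.conv_S"
    using z vleft_conv_BC vright_conv_BC by blast+
  then show ?thesis
    using B.bsum_eq_\<psi>[OF _ i assms(3)] C.bsum_eq_\<psi>[OF _ i assms(4)] \<psi>_agree[OF z] by simp
qed

text \<open>The blending function \<open>\<beta> x \<beta>' y / \<Sigma>\<^sub>x\<^sub>' \<beta> x'\<close> of \<open>vjoin x y\<close>, written over the common
  denominators \<open>B.den\<close> and \<open>C.den\<close>. The extra factor \<open>B.den\<close> in numerator and denominator
  makes \<open>\<gamma> m\<close> undefined wherever one of the \<open>\<beta> x\<close> is.\<close>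
definition "\<gamma> m =
  ((\<lambda>X. fst (\<beta> (vleft m)) (vleft X) * (\<Prod>x\<in>B - {vleft m}. snd (\<beta> x) (vleft X))
      * fst (\<beta>' (vright m)) (vright X) * (\<Prod>y\<in>C - {vright m}. snd (\<beta>' y) (vright X))
      * B.den (vleft X)),
   (\<lambda>X. B.den (vleft X) * C.den (vright X) * B.bnum (fibre m) (vleft X)))"

lemma \<gamma>_defined_iff:
  "rf_defined (\<gamma> m) X \<longleftrightarrow> B.den (vleft X) \<noteq> 0 \<and> C.den (vright X) \<noteq> 0 \<and> B.bnum (fibre m) (vleft X) \<noteq> 0"
  unfolding rf_defined_def \<gamma>_def by simp

lemma \<gamma>_eval:
  assumes "i < r" "x \<in> B.blk i" "y \<in> C.blk i" "B.den (vleft X) \<noteq> 0" "C.den (vright X) \<noteq> 0"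
  shows "rf_eval (\<gamma> (vjoin x y)) X
    = rf_eval (\<beta> x) (vleft X) * rf_eval (\<beta>' y) (vright X) / B.bsum i (vleft X)"
proof -
  have x: "x \<in> B" and y: "y \<in> C" using assms B.blk_subset C.blk_subset by blast+
  have fibre: "fibre (vjoin x y) = i" using fibre_eq[OF assms(1), of "vjoin x y"] assms(2) by simp
  show ?thesis
    using B.den_nonzero_snd[OF assms(4) x] C.den_nonzero_snd[OF assms(5) y] assms(4,5)
    unfolding \<gamma>_def rf_eval_def fst_conv snd_conv vleft_vjoin vright_vjoin fibre
      B.bnum_eq[OF assms(4,1)] B.prod_snd_remove[OF x assms(4)] C.prod_snd_remove[OF y assms(5)]
    by (simp add: field_simps B.bsum_def rf_eval_def)
qed

lemma \<gamma>_all_defined_iff: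
  "(\<forall>m\<in>BC. rf_defined (\<gamma> m) X) \<longleftrightarrow>
     B.den (vleft X) \<noteq> 0 \<and> C.den (vright X) \<noteq> 0 \<and> (\<forall>i<r. B.bsum i (vleft X) \<noteq> 0)"
proof
  assume all: "\<forall>m\<in>BC. rf_defined (\<gamma> m) X"
  have m: "vjoin (b i 0) (c i 0) \<in> BC" "fibre (vjoin (b i 0) (c i 0)) = i" if "i < r" for i
    using vjoin_in_BC[OF that B.b0_in_blk[OF that] C.b0_in_blk[OF that]]
      fibre_eq[OF that, of "vjoin (b i 0) (c i 0)"] B.b0_in_blk[OF that] by auto
  then have den: "B.den (vleft X) \<noteq> 0" "C.den (vright X) \<noteq> 0"
    using all \<gamma>_defined_iff B.r_pos by blast+
  moreover have "B.bsum i (vleft X) \<noteq> 0" if "i < r" for i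
    using all m[OF that] \<gamma>_defined_iff B.bnum_eq[OF den(1) that] by fastforce
  ultimately show "B.den (vleft X) \<noteq> 0 \<and> C.den (vright X) \<noteq> 0 \<and> (\<forall>i<r. B.bsum i (vleft X) \<noteq> 0)"
    by blast
next
  assume "B.den (vleft X) \<noteq> 0 \<and> C.den (vright X) \<noteq> 0 \<and> (\<forall>i<r. B.bsum i (vleft X) \<noteq> 0)"
  then show "\<forall>m\<in>BC. rf_defined (\<gamma> m) X"
    by (auto elim!: BC_memE simp: \<gamma>_defined_iff fibre_eq B.bnum_eq)
qed

lemma sum_BC_\<gamma>:
  assumes "\<forall>m\<in>BC. rf_defined (\<gamma> m) X"
  shows "(\<Sum>m\<in>BC. rf_eval (\<gamma> m) X * h m) = (\<Sum>i<r. \<Sum>x\<in>B.blk i. \<Sum>y\<in>C.blk i.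
    rf_eval (\<beta> x) (vleft X) * rf_eval (\<beta>' y) (vright X) / B.bsum i (vleft X) * h (vjoin x y))"
  using assms unfolding sum_BC \<gamma>_all_defined_iff by (intro sum.cong refl) (simp add: \<gamma>_eval)

lemma sum_\<gamma>_eq_1:
  assumes def: "\<forall>m\<in>BC. rf_defined (\<gamma> m) X"
  shows "(\<Sum>m\<in>BC. rf_eval (\<gamma> m) X) = 1"
proof -
  have den: "C.den (vright X) \<noteq> 0" and bsum: "\<And>i. i < r \<Longrightarrow> B.bsum i (vleft X) \<noteq> 0"
    using def unfolding \<gamma>_all_defined_iff by blast+
  have "(\<Sum>m\<in>BC. rf_eval (\<gamma> m) X) = (\<Sum>m\<in>BC. rf_eval (\<gamma> m) X * 1)" by simp
  also have "\<dots> = (\<Sum>i<r. \<Sum>x\<in>B.blk i. \<Sum>y\<in>C.blk i.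
      rf_eval (\<beta> x) (vleft X) * rf_eval (\<beta>' y) (vright X) / B.bsum i (vleft X) * 1)"
    by (rule sum_BC_\<gamma>[OF def])
  also have "\<dots> = (\<Sum>i<r. \<Sum>y\<in>C.blk i. rf_eval (\<beta>' y) (vright X) * 1)"
    using bsum by (intro sum.cong refl sum_sum_div_sum) (auto simp: B.bsum_def)
  also have "\<dots> = 1"
    using C.sum_\<beta>_eq_1 den unfolding C.den_nonzero_iff C.sum_S_blocks by simp
  finally show ?thesis .
qed

text \<open>On a \<open>B\<close>-coordinate the \<open>C\<close>-blending functions of fibre \<open>i\<close> sum to the
  denominator by \<open>bsum_agree\<close>, on a \<open>C\<close>-coordinate the \<open>B\<close>-blending functions do.\<close>
lemma \<gamma>_linear_precision:
  assumes z: "z \<in> conv_BC" and def: "\<forall>m\<in>BC. rf_defined (\<gamma> m) (cvec z)"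
  shows "(\<Sum>m\<in>BC. rf_eval (\<gamma> m) (cvec z) * of_int (m $ l)) = cvec z $ l"
proof -
  define p where "p = vleft z"
  define q where "q = vright z"
  have pq: "p \<in> B.conv_S" "q \<in> C.conv_S"
    using z vleft_conv_BC vright_conv_BC p_def q_def by blast+
  have den: "B.den (cvec p) \<noteq> 0" "C.den (cvec q) \<noteq> 0" and bsum: "\<And>i. i < r \<Longrightarrow> B.bsum i (cvec p) \<noteq> 0"
    using def \<gamma>_all_defined_iff[of "cvec z"] by (auto simp: p_def q_def vleft_cvec vright_cvec)
  have agree: "B.bsum i (cvec p) = C.bsum i (cvec q)" if "i < r" for i
    using bsum_agree[OF z that] den B.blk_subset[OF that] C.blk_subset[OF that]
    by (auto simp: p_def q_def B.den_nonzero_iff C.den_nonzero_iff)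
  have expand: "(\<Sum>m\<in>BC. rf_eval (\<gamma> m) (cvec z) * of_int (m $ l)) = (\<Sum>i<r. \<Sum>x\<in>B.blk i. \<Sum>y\<in>C.blk i.
      rf_eval (\<beta> x) (cvec p) * rf_eval (\<beta>' y) (cvec q) / B.bsum i (cvec p) * of_int (vjoin x y $ l))"
    using sum_BC_\<gamma>[OF def] by (simp add: p_def q_def vleft_cvec vright_cvec)
  show ?thesis
  proof (cases l)
    case (Inl l1)
    have "(\<Sum>m\<in>BC. rf_eval (\<gamma> m) (cvec z) * of_int (m $ l)) = (\<Sum>i<r. \<Sum>x\<in>B.blk i. \<Sum>y\<in>C.blk i.
        rf_eval (\<beta> x) (cvec p) * rf_eval (\<beta>' y) (cvec q) / B.bsum i (cvec p) * of_int (x $ l1))"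
      using expand by (simp add: Inl)
    also have "\<dots> = (\<Sum>i<r. \<Sum>x\<in>B.blk i. rf_eval (\<beta> x) (cvec p) * of_int (x $ l1))"
      by (rule sum.cong[OF refl], rule sum_sum_div_sum') (use agree bsum in \<open>auto simp: C.bsum_def\<close>)
    also have "\<dots> = cvec z $ l"
      using B.\<beta>_linear_precision[OF pq(1)] den(1)
      by (simp add: B.sum_S_blocks[symmetric] B.den_nonzero_iff Inl p_def cvec_def vleft_def)
    finally show ?thesis .
  next
    case (Inr l2)
    have "(\<Sum>m\<in>BC. rf_eval (\<gamma> m) (cvec z) * of_int (m $ l)) = (\<Sum>i<r. \<Sum>x\<in>B.blk i. \<Sum>y\<in>C.blk i.
        rf_eval (\<beta> x) (cvec p) * rf_eval (\<beta>' y) (cvec q) / B.bsum i (cvec p) * of_int (y $ l2))"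
      using expand by (simp add: Inr)
    also have "\<dots> = (\<Sum>i<r. \<Sum>y\<in>C.blk i. rf_eval (\<beta>' y) (cvec q) * of_int (y $ l2))"
      by (rule sum.cong[OF refl], rule sum_sum_div_sum) (use bsum in \<open>auto simp: B.bsum_def\<close>)
    also have "\<dots> = cvec z $ l"
      using C.\<beta>_linear_precision[OF pq(2)] den(2)
      by (simp add: C.sum_S_blocks[symmetric] C.den_nonzero_iff Inr q_def cvec_def vright_def)
    finally show ?thesis .
  qed
qed

lemma \<gamma>_rel_interior:
  assumes z: "z \<in> rel_interior conv_BC" and m: "m \<in> BC"
  shows "rf_defined (\<gamma> m) (cvec z) \<and> (\<exists>u::real. u \<ge> 0 \<and> rf_eval (\<gamma> m) (cvec z) = complex_of_real u)"
proof -
  define p where "p = vleft z"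
  define q where "q = vright z"
  have p: "p \<in> rel_interior B.conv_S" and q: "q \<in> rel_interior C.conv_S"
    using vleft_rel_interior vright_rel_interior z p_def q_def by blast+
  have den: "B.den (cvec p) \<noteq> 0" "C.den (cvec q) \<noteq> 0"
    using B.\<beta>_relint[OF p] C.\<beta>_relint[OF q] B.den_nonzero_iff C.den_nonzero_iff by blast+
  have bsum: "B.bsum i (cvec p) = complex_of_real (B.\<psi> i p)" "B.\<psi> i p > 0" if "i < r" for i
    using B.bsum_eq_\<psi>[OF _ that] B.\<psi>_pos[OF p that] B.\<beta>_relint[OF p] B.blk_subset[OF that]
      p rel_interior_subset by blast+
  then have "\<forall>i<r. B.bsum i (cvec p) \<noteq> 0"
    by (metis less_irrefl of_real_eq_0_iff)
  then have "\<forall>m\<in>BC. rf_defined (\<gamma> m) (cvec z)"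
    using den by (simp add: \<gamma>_all_defined_iff p_def q_def vleft_cvec vright_cvec)
  moreover obtain i where i: "i < r" "vleft m \<in> B.blk i" "vright m \<in> C.blk i"
    using m by (rule BC_memE)
  moreover obtain u1 where u1: "u1 \<ge> 0" "rf_eval (\<beta> (vleft m)) (cvec p) = complex_of_real u1"
    using B.\<beta>_relint[OF p] vleft_in_B[OF m] by blast
  moreover obtain u2 where u2: "u2 \<ge> 0" "rf_eval (\<beta>' (vright m)) (cvec q) = complex_of_real u2"
    using C.\<beta>_relint[OF q] vright_in_C[OF m] by blast
  ultimately have "rf_eval (\<gamma> m) (cvec z) = complex_of_real (u1 * u2 / B.\<psi> i p)"
    using \<gamma>_eval[OF i, of "cvec z"] den bsum
    by (simp add: p_def q_def vleft_cvec vright_cvec)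
  moreover have "u1 * u2 / B.\<psi> i p \<ge> 0" using u1 u2 bsum(2)[OF i(1)] by simp
  ultimately show ?thesis using \<open>\<forall>m\<in>BC. rf_defined (\<gamma> m) (cvec z)\<close> m by blast
qed

lemma is_ratfun_\<gamma>:
  assumes m: "m \<in> BC"
  shows "is_ratfun (\<gamma> m)"
proof -
  obtain i where i: "i < r" "vleft m \<in> B.blk i" using m by (rule BC_memE)
  have "cpoly (fst (\<gamma> m))"
    unfolding \<gamma>_def fst_conv using vleft_in_B[OF m] vright_in_C[OF m]
    by (intro cpoly_mult cpoly_prod B.finite_S C.finite_S finite_Diff cpoly_vleft cpoly_vright
        B.cpoly_\<beta> C.cpoly_\<beta> B.cpoly_den) auto
  moreover have "cpoly (snd (\<gamma> m))"
    unfolding \<gamma>_def snd_conv fibre_eq[OF i]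
    by (intro cpoly_mult cpoly_vleft cpoly_vright B.cpoly_den C.cpoly_den B.cpoly_bnum i)
  moreover have "rel_interior conv_BC \<noteq> {}"
    using BC_nonempty unfolding conv_BC_def by (simp add: rel_interior_eq_empty)
  then obtain z where "z \<in> rel_interior conv_BC" by blast
  then have "snd (\<gamma> m) \<noteq> (\<lambda>_. 0)"
    using \<gamma>_rel_interior[OF _ m] unfolding rf_defined_def by fastforce
  ultimately show ?thesis unfolding is_ratfun_def by blast
qed

section \<open>The rational parametrization\<close>

definition "glue Y Z = (\<lambda>m. if m \<in> BC then Y (vleft m) * Z (vright m) / B.ysum (fibre m) Y else 0)"
definition "paramBC X = (\<lambda>m. if m \<in> BC then rf_eval (\<gamma> m) X else 0)"
definition "paramBC_image = {paramBC X | X. \<forall>m\<in>BC. rf_defined (\<gamma> m) X}"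
definition "torus_image_BC = {torus_pt BC wBC u | u. \<forall>l. u$l \<noteq> 0}"
definition "fibre_deg i e = (\<Sum>m\<in>BCi i. e m)"

text \<open>The pull-back along \<open>glue\<close> of a homogeneous \<open>F = \<Sigma>\<^sub>e cf e y\<^sup>e\<close> of degree \<open>\<delta>\<close>,
  with the denominators \<open>B.ysum i Y\<close> cleared.\<close>
definition "glue_hom E cf \<delta> Y Z = (\<Sum>e\<in>E. cf e * (\<Prod>i<r. B.ysum i Y ^ (\<delta> - fibre_deg i e))
    * (\<Prod>m\<in>BC. (Y (vleft m) * Z (vright m)) ^ e m))"

lemma paramBC_eq_glue:
  assumes "B.den (vleft X) \<noteq> 0" "C.den (vright X) \<noteq> 0"
  shows "paramBC X = glue (B.param (vleft X)) (C.param (vright X))"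
proof
  fix m
  show "paramBC X m = glue (B.param (vleft X)) (C.param (vright X)) m"
  proof (cases "m \<in> BC")
    case True
    then obtain i where i: "i < r" "vleft m \<in> B.blk i" "vright m \<in> C.blk i" by (rule BC_memE)
    have "glue (B.param (vleft X)) (C.param (vright X)) m
        = B.param (vleft X) (vleft m) * C.param (vright X) (vright m) / B.bsum i (vleft X)"
      using True i by (simp add: glue_def fibre_eq B.ysum_param)
    also have "\<dots> = rf_eval (\<gamma> m) X"
      using \<gamma>_eval[OF i assms] True
      by (simp add: B.param_def C.param_def vleft_in_B vright_in_C)
    finally show ?thesis using True by (simp add: paramBC_def)
  qed (simp add: paramBC_def glue_def)
qed

lemma fibre_deg_sum: "(\<Sum>i<r. fibre_deg i e) = (\<Sum>m\<in>BC. e m)"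
  unfolding fibre_deg_def by (simp add: sum_BC_blocks)

lemma fibre_deg_le:
  assumes "hpoly_rep BC E cf \<delta> F" "e \<in> E" "i < r"
  shows "fibre_deg i e \<le> \<delta>"
proof -
  have "fibre_deg i e \<le> (\<Sum>i<r. fibre_deg i e)" by (rule member_le_sum) (use assms(3) in auto)
  also have "\<dots> = \<delta>" using assms(1,2) unfolding fibre_deg_sum hpoly_rep_def by blast
  finally show ?thesis .
qed

lemma glue_hom_eq:
  assumes rep: "hpoly_rep BC E cf \<delta> F" and nz: "\<forall>i<r. B.ysum i Y \<noteq> 0"
  shows "glue_hom E cf \<delta> Y Z = (\<Prod>i<r. B.ysum i Y ^ \<delta>) * F (glue Y Z)"
proof -
  have F: "F = (\<lambda>y. \<Sum>e\<in>E. cf e * (\<Prod>m\<in>BC. (y m) ^ e m))" using rep hpoly_rep_def by blast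
  have term_eq: "(\<Prod>i<r. B.ysum i Y ^ \<delta>) * (cf e * (\<Prod>m\<in>BC. glue Y Z m ^ e m)) =
      cf e * (\<Prod>i<r. B.ysum i Y ^ (\<delta> - fibre_deg i e)) * (\<Prod>m\<in>BC. (Y (vleft m) * Z (vright m)) ^ e m)"
    if e: "e \<in> E" for e
  proof -
    have "(\<Prod>m\<in>BC. glue Y Z m ^ e m)
        = (\<Prod>m\<in>BC. (Y (vleft m) * Z (vright m)) ^ e m) / (\<Prod>m\<in>BC. B.ysum (fibre m) Y ^ e m)"
      by (simp add: glue_def power_divide prod_dividef[symmetric] cong: prod.cong)
    also have "(\<Prod>m\<in>BC. B.ysum (fibre m) Y ^ e m) = (\<Prod>i<r. B.ysum i Y ^ fibre_deg i e)"
      unfolding prod_BC_blocks fibre_deg_def power_sum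
      by (intro prod.cong refl) (auto simp: BCi_def fibre_eq)
    finally have 1: "(\<Prod>m\<in>BC. glue Y Z m ^ e m)
        = (\<Prod>m\<in>BC. (Y (vleft m) * Z (vright m)) ^ e m) / (\<Prod>i<r. B.ysum i Y ^ fibre_deg i e)" .
    have 2: "(\<Prod>i<r. B.ysum i Y ^ (\<delta> - fibre_deg i e))
        = (\<Prod>i<r. B.ysum i Y ^ \<delta>) / (\<Prod>i<r. B.ysum i Y ^ fibre_deg i e)"
      unfolding prod_dividef[symmetric] using nz fibre_deg_le[OF rep e]
      by (intro prod.cong refl) (simp add: power_diff)
    have 3: "(\<Prod>i<r. B.ysum i Y ^ fibre_deg i e) \<noteq> 0" using nz by simp
    show ?thesis unfolding 1 2 using 3 by (simp add: field_simps)
  qed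
  show ?thesis unfolding glue_hom_def F by (simp add: sum_distrib_left term_eq)
qed

lemma gpoly_glue_hom_B:
  assumes rep: "hpoly_rep BC E cf \<delta> F"
  shows "gpoly B (\<lambda>k. k = r * \<delta>) (\<lambda>Y. glue_hom E cf \<delta> Y Z)"
proof -
  have "gpoly B (\<lambda>k. k = r * \<delta>) (\<lambda>Y. cf e * ((\<Prod>i<r. B.ysum i Y ^ (\<delta> - fibre_deg i e))
      * (\<Prod>m\<in>BC. (Z (vright m) * Y (vleft m)) ^ e m)))" if e: "e \<in> E" for e
  proof (rule gpoly_cmult)
    have deg: "(\<Sum>m\<in>BC. e m) = \<delta>" using rep e hpoly_rep_def by blast
    have "(\<Sum>i<r. \<delta> - fibre_deg i e) + (\<Sum>i<r. fibre_deg i e) = (\<Sum>i<r. \<delta>)"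
      unfolding sum.distrib[symmetric] using fibre_deg_le[OF rep e] by (intro sum.cong) auto
    then have "(\<Sum>i<r. \<delta> - fibre_deg i e) + \<delta> = r * \<delta>" using fibre_deg_sum[of e] deg by simp
    moreover have "gpoly B (\<lambda>k. k = (\<Sum>i<r. (\<delta> - fibre_deg i e) * 1))
        (\<lambda>Y. \<Prod>i<r. B.ysum i Y ^ (\<delta> - fibre_deg i e))"
      by (intro gpoly_prod_homogeneous gpoly_power_homogeneous B.gpoly_ysum) auto
    moreover have "gpoly B (\<lambda>k. k = (\<Sum>m\<in>BC. e m * 1)) (\<lambda>Y. \<Prod>m\<in>BC. (Z (vright m) * Y (vleft m)) ^ e m)"
      by (intro gpoly_prod_homogeneous finite_BC gpoly_power_homogeneous gpoly_cmult
          gpoly_var B.finite_S vleft_in_B)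
    ultimately show "gpoly B (\<lambda>k. k = r * \<delta>) (\<lambda>Y. (\<Prod>i<r. B.ysum i Y ^ (\<delta> - fibre_deg i e))
        * (\<Prod>m\<in>BC. (Z (vright m) * Y (vleft m)) ^ e m))"
      using deg by (auto elim: gpoly_mono dest: gpoly_mult)
  qed
  then have "gpoly B (\<lambda>k. k = r * \<delta>) (\<lambda>Y. \<Sum>e\<in>E. cf e * ((\<Prod>i<r. B.ysum i Y ^ (\<delta> - fibre_deg i e))
      * (\<Prod>m\<in>BC. (Z (vright m) * Y (vleft m)) ^ e m)))"
    using rep unfolding hpoly_rep_def by (intro gpoly_sum) auto
  then show ?thesis unfolding glue_hom_def by (simp add: mult_ac)
qed

lemma gpoly_glue_hom_C:
  assumes rep: "hpoly_rep BC E cf \<delta> F"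
  shows "gpoly C (\<lambda>k. k = \<delta>) (\<lambda>Z. glue_hom E cf \<delta> Y Z)"
proof -
  have "gpoly C (\<lambda>k. k = \<delta>) (\<lambda>Z. (cf e * (\<Prod>i<r. B.ysum i Y ^ (\<delta> - fibre_deg i e))
      * (\<Prod>m\<in>BC. Y (vleft m) ^ e m)) * (\<Prod>m\<in>BC. Z (vright m) ^ e m))" if e: "e \<in> E" for e
  proof (rule gpoly_cmult)
    have "gpoly C (\<lambda>k. k = (\<Sum>m\<in>BC. e m * 1)) (\<lambda>Z. \<Prod>m\<in>BC. Z (vright m) ^ e m)"
      by (intro gpoly_prod_homogeneous finite_BC gpoly_power_homogeneous gpoly_var C.finite_S vright_in_C)
    moreover have "(\<Sum>m\<in>BC. e m) = \<delta>" using rep e hpoly_rep_def by blast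
    ultimately show "gpoly C (\<lambda>k. k = \<delta>) (\<lambda>Z. \<Prod>m\<in>BC. Z (vright m) ^ e m)" by simp
  qed
  then have "gpoly C (\<lambda>k. k = \<delta>) (\<lambda>Z. \<Sum>e\<in>E. (cf e * (\<Prod>i<r. B.ysum i Y ^ (\<delta> - fibre_deg i e))
      * (\<Prod>m\<in>BC. Y (vleft m) ^ e m)) * (\<Prod>m\<in>BC. Z (vright m) ^ e m))"
    using rep unfolding hpoly_rep_def by (intro gpoly_sum) auto
  then show ?thesis unfolding glue_hom_def by (simp add: power_mult_distrib prod.distrib mult.assoc)
qed

lemma hpoly_glue_hom_yprod:
  assumes "hpoly_rep BC E cf \<delta> F"
  shows "hpoly B (\<lambda>Y. glue_hom E cf \<delta> Y Z * B.yprod Y)"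
    and "hpoly C (\<lambda>Z. glue_hom E cf \<delta> Y Z * B.yprod Y)"
  unfolding hpoly_iff_gpoly
  using gpoly_mult[OF gpoly_glue_hom_B[OF assms] B.gpoly_yprod]
    gpoly_cmult[OF gpoly_glue_hom_C[OF assms], of "B.yprod Y" Y]
  by (auto elim!: gpoly_mono simp: mult.commute)

lemma glue_torus:
  assumes tv: "\<forall>l. tv$l \<noteq> 0"
    and u: "\<forall>i<r. \<forall>y\<in>C.blk i. laurent_mon u2 y = B.ysum i (torus_pt B w tv) * laurent_mon u1 y"
    and nz: "\<forall>i<r. B.ysum i (torus_pt B w tv) \<noteq> 0"
  shows "glue (torus_pt B w tv) (torus_pt C w' u2) = torus_pt BC wBC (vjoin tv u1)"
proof
  fix m
  show "glue (torus_pt B w tv) (torus_pt C w' u2) m = torus_pt BC wBC (vjoin tv u1) m"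
  proof (cases "m \<in> BC")
    case True
    then obtain i where i: "i < r" "vleft m \<in> B.blk i" "vright m \<in> C.blk i" by (rule BC_memE)
    have "laurent_mon (vjoin tv u1) m = laurent_mon tv (vleft m) * laurent_mon u1 (vright m)"
      using laurent_mon_vjoin[of "vjoin tv u1" "vleft m" "vright m"] by simp
    then show ?thesis
      using True i u nz vleft_in_B vright_in_C
      by (simp add: glue_def torus_pt_def fibre_eq wBC_def)
  qed (simp add: glue_def torus_pt_def)
qed

lemma vjoin_nonzero: "\<forall>l. tv$l \<noteq> 0 \<Longrightarrow> \<forall>l. u$l \<noteq> 0 \<Longrightarrow> \<forall>l. vjoin tv u $ l \<noteq> 0"
  by (simp add: vjoin_def split: sum.split)

lemma paramBC_in_proj_pts:
  assumes "\<forall>m\<in>BC. rf_defined (\<gamma> m) X"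
  shows "paramBC X \<in> proj_pts BC"
proof -
  have "\<exists>m\<in>BC. paramBC X m \<noteq> 0"
  proof (rule ccontr)
    assume "\<not> (\<exists>m\<in>BC. paramBC X m \<noteq> 0)"
    then have "(\<Sum>m\<in>BC. rf_eval (\<gamma> m) X) = 0" by (simp add: paramBC_def)
    then show False using sum_\<gamma>_eq_1[OF assms] by simp
  qed
  then show ?thesis unfolding proj_pts_def paramBC_def by auto
qed

lemma glue_hom_yprod_torus_vanish:
  assumes rep: "hpoly_rep BC E cf \<delta> F" and F0: "\<forall>z\<in>torus_image_BC. F z = 0"
    and Y: "Y \<in> B.torus_image" and Z: "Z \<in> C.torus_image"
  shows "glue_hom E cf \<delta> Y Z * B.yprod Y = 0"
proof (cases "B.yprod Y = 0")
  case False
  obtain tv where tv: "\<forall>l. tv$l \<noteq> 0" "Y = torus_pt B w tv" using Y unfolding B.torus_image_def by blast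
  obtain u where u: "\<forall>l. u$l \<noteq> 0" "Z = torus_pt C w' u" using Z unfolding C.torus_image_def by blast
  have nz: "\<forall>i<r. B.ysum i Y \<noteq> 0" using False B.yprod_nonzero_iff by blast
  obtain u1 where u1: "\<forall>l. u1$l \<noteq> 0" "\<forall>i<r. \<forall>y\<in>C.blk i. laurent_mon u1 y = 1 / B.ysum i Y * laurent_mon u y"
    using C.torus_rescale_fibres[of "\<lambda>i. 1 / B.ysum i Y" u] nz u(1) by auto
  have "glue Y Z = torus_pt BC wBC (vjoin tv u1)"
    unfolding tv(2) u(2) by (rule glue_torus[OF tv(1)]) (use u1 nz tv in auto)
  moreover have "torus_pt BC wBC (vjoin tv u1) \<in> torus_image_BC"
    unfolding torus_image_BC_def using vjoin_nonzero[OF tv(1) u1(1)] by blast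
  ultimately have "F (glue Y Z) = 0" using F0 by simp
  then show ?thesis using glue_hom_eq[OF rep nz] by simp
qed simp

lemma glue_hom_yprod_param_vanish:
  assumes rep: "hpoly_rep BC E cf \<delta> F" and F0: "\<forall>z\<in>paramBC_image. F z = 0"
    and Y: "Y \<in> B.param_image" and Z: "Z \<in> C.param_image"
  shows "glue_hom E cf \<delta> Y Z * B.yprod Y = 0"
proof (cases "B.yprod Y = 0")
  case False
  obtain P where P: "B.den P \<noteq> 0" "Y = B.param P" using Y unfolding B.param_image_def by blast
  obtain Q where Q: "C.den Q \<noteq> 0" "Z = C.param Q" using Z unfolding C.param_image_def by blast
  have nz: "\<forall>i<r. B.ysum i Y \<noteq> 0" using False B.yprod_nonzero_iff by blast
  then have "\<forall>m\<in>BC. rf_defined (\<gamma> m) (vjoin P Q)"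
    using P Q B.ysum_param by (simp add: \<gamma>_all_defined_iff)
  then have "paramBC (vjoin P Q) \<in> paramBC_image" unfolding paramBC_image_def by blast
  moreover have "paramBC (vjoin P Q) = glue Y Z" using paramBC_eq_glue[of "vjoin P Q"] P Q by simp
  ultimately have "F (glue Y Z) = 0" using F0 by simp
  then show ?thesis using glue_hom_eq[OF rep nz] by simp
qed simp

lemma toric_var_BC_eq_closure: "toric_var BC wBC = proj_closure BC torus_image_BC"
  unfolding torus_image_BC_def by (rule toric_var_eq_closure_torus)

lemma paramBC_image_subset: "paramBC_image \<subseteq> toric_var BC wBC"
proof
  fix y assume "y \<in> paramBC_image"
  then obtain X where def: "\<forall>m\<in>BC. rf_defined (\<gamma> m) X" and y: "y = paramBC X"
    unfolding paramBC_image_def by blast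
  have den: "B.den (vleft X) \<noteq> 0" "C.den (vright X) \<noteq> 0"
    and nz: "\<forall>i<r. B.ysum i (B.param (vleft X)) \<noteq> 0"
    using def B.ysum_param unfolding \<gamma>_all_defined_iff by auto
  show "y \<in> toric_var BC wBC"
    unfolding toric_var_BC_eq_closure proj_closure_def
  proof (intro CollectI conjI allI impI)
    show "y \<in> proj_pts BC" using paramBC_in_proj_pts[OF def] y by simp
    fix F assume F: "hpoly BC F \<and> (\<forall>z\<in>torus_image_BC. F z = 0)"
    then obtain E cf \<delta> where rep: "hpoly_rep BC E cf \<delta> F" using hpoly_iff_rep by blast
    have "B.param (vleft X) \<in> proj_closure B B.torus_image" "C.param (vright X) \<in> proj_closure C C.torus_image"
      using B.param_image_subset C.param_image_subset den
      unfolding B.toric_var_eq_closure_torus_image C.toric_var_eq_closure_torus_image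
        B.param_image_def C.param_image_def by blast+
    then have "glue_hom E cf \<delta> (B.param (vleft X)) (C.param (vright X)) * B.yprod (B.param (vleft X)) = 0"
      by (rule proj_closure_product_vanish[OF hpoly_glue_hom_yprod[OF rep]
          glue_hom_yprod_torus_vanish[OF rep conjunct2[OF F]], rotated 2])
    moreover have "B.yprod (B.param (vleft X)) \<noteq> 0" using nz B.yprod_nonzero_iff by blast
    ultimately show "F y = 0" using glue_hom_eq[OF rep nz] nz paramBC_eq_glue[OF den] y by simp
  qed
qed

lemma torus_vanish_cancel_yprod:
  assumes "hpoly BC F"
    and "\<And>z. \<forall>l. z$l \<noteq> 0 \<Longrightarrow> F (torus_pt BC wBC z) * B.yprod (torus_pt B w (vleft z)) = 0"
    and "\<forall>l. z$l \<noteq> 0"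
  shows "F (torus_pt BC wBC z) = 0"
proof (rule torus_zero_product_cancel[where f="\<lambda>z. F (torus_pt BC wBC z)"
      and g="\<lambda>z. B.yprod (torus_pt B w (vleft z))"])
  obtain d where "gpoly BC (\<lambda>k. k = d) F" using assms(1) hpoly_iff_gpoly by blast
  then show "(\<lambda>\<tau>. F (torus_pt BC wBC (\<chi> l. exp (\<tau> * v$l)))) holomorphic_on UNIV" for v
    by (rule gpoly_torus_pt_holomorphic[OF _ finite_BC])
  show "(\<lambda>\<tau>. B.yprod (torus_pt B w (vleft (\<chi> l. exp (\<tau> * v$l))))) holomorphic_on UNIV"
    and "B.yprod (torus_pt B w (vleft (\<chi> l. 1 :: complex^('d1 + 'd2)))) \<noteq> 0"
    for v :: "complex^('d1 + 'd2)"
    using gpoly_torus_pt_holomorphic[OF B.gpoly_yprod B.finite_S, of w "vleft v"] B.yprod_torus_one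
    by (simp_all add: vleft_def)
qed (use assms(2,3) in auto)

lemma torus_image_BC_subset: "torus_image_BC \<subseteq> proj_closure BC paramBC_image"
proof
  fix y assume "y \<in> torus_image_BC"
  then obtain t0 where t0: "\<forall>l. t0$l \<noteq> 0" "y = torus_pt BC wBC t0" unfolding torus_image_BC_def by blast
  show "y \<in> proj_closure BC paramBC_image"
    unfolding proj_closure_def
  proof (intro CollectI conjI allI impI)
    show "y \<in> proj_pts BC"
      using torus_pt_in_proj_pts[OF finite_BC BC_nonempty _ t0(1)] vleft_in_B vright_in_C
        B.w_pos C.w_pos t0(2) by (simp add: wBC_def)
    fix F assume F: "hpoly BC F \<and> (\<forall>z\<in>paramBC_image. F z = 0)"
    then obtain E cf \<delta> where rep: "hpoly_rep BC E cf \<delta> F" using hpoly_iff_rep by blast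
    have "F (torus_pt BC wBC z) * B.yprod (torus_pt B w (vleft z)) = 0" if z: "\<forall>l. z$l \<noteq> 0" for z
    proof (cases "B.yprod (torus_pt B w (vleft z)) = 0")
      case False
      let ?Y = "torus_pt B w (vleft z)"
      have nz: "\<forall>i<r. B.ysum i ?Y \<noteq> 0" using False B.yprod_nonzero_iff by blast
      have tl: "\<forall>l. vleft z $ l \<noteq> 0" and tr: "\<forall>l. vright z $ l \<noteq> 0"
        using z by (simp_all add: vleft_def vright_def)
      obtain u where u: "\<forall>l. u$l \<noteq> 0" "\<forall>i<r. \<forall>y\<in>C.blk i. laurent_mon u y = B.ysum i ?Y * laurent_mon (vright z) y"
        using C.torus_rescale_fibres[of "\<lambda>i. B.ysum i ?Y" "vright z"] nz tr by auto
      have glue: "glue ?Y (torus_pt C w' u) = torus_pt BC wBC z"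
        using glue_torus[OF tl u(2) nz] by simp
      have "?Y \<in> proj_closure B B.param_image" "torus_pt C w' u \<in> proj_closure C C.param_image"
        using B.torus_image_subset C.torus_image_subset tl u(1)
        unfolding B.proj_closure_param_image C.proj_closure_param_image
          B.torus_image_def C.torus_image_def by blast+
      then have "glue_hom E cf \<delta> ?Y (torus_pt C w' u) * B.yprod ?Y = 0"
        by (rule proj_closure_product_vanish[OF hpoly_glue_hom_yprod[OF rep]
            glue_hom_yprod_param_vanish[OF rep conjunct2[OF F]], rotated 2])
      then show ?thesis using glue_hom_eq[OF rep nz] glue nz False by simp
    qed simp
    then show "F y = 0"
      using torus_vanish_cancel_yprod[OF conjunct1[OF F] _ t0(1)] t0(2) by blast
  qed
qed

lemma proj_closure_paramBC_image: "proj_closure BC paramBC_image = toric_var BC wBC"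
proof
  show "proj_closure BC paramBC_image \<subseteq> toric_var BC wBC"
    using proj_closure_minimal[of paramBC_image BC torus_image_BC] paramBC_image_subset
    by (simp add: toric_var_BC_eq_closure)
  show "toric_var BC wBC \<subseteq> proj_closure BC paramBC_image"
    unfolding toric_var_BC_eq_closure by (rule proj_closure_minimal[OF torus_image_BC_subset])
qed

theorem blending_functions_\<gamma>: "blending_functions BC wBC \<gamma>"
  unfolding blending_functions_def Let_def
  using is_ratfun_\<gamma> sum_\<gamma>_eq_1 paramBC_image_subset proj_closure_paramBC_image
    \<gamma>_rel_interior \<gamma>_linear_precision
  unfolding paramBC_image_def paramBC_def conv_BC_def by blast

lemma \<gamma>_eval_fibre:
  assumes "i < r" "j < s i" "k < t i" "rf_defined (\<gamma> (vjoin (b i j) (c i k))) X"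
  shows "rf_eval (\<gamma> (vjoin (b i j) (c i k))) X
    = rf_eval (\<beta> (b i j)) (vleft X) * rf_eval (\<beta>' (c i k)) (vright X)
      / (\<Sum>x\<in>{b i j' | j'. j' < s i}. rf_eval (\<beta> x) (vleft X))"
proof -
  have "b i j \<in> B.blk i" "c i k \<in> C.blk i" using assms(2,3) unfolding B.blk_def C.blk_def by blast+
  then show ?thesis
    using \<gamma>_eval[OF assms(1)] assms(4) unfolding \<gamma>_defined_iff B.bsum_def B.blk_def by blast
qed

lemma fibre_sums_agree:
  assumes "i < r" "z \<in> convex hull (rvec ` toric_fiber_product r s t b c)"
    and "\<forall>x\<in>{b i j | j. j < s i}. rf_defined (\<beta> x) (vleft (cvec z))"
    and "\<forall>y\<in>{c i k | k. k < t i}. rf_defined (\<beta>' y) (vright (cvec z))"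
  shows "(\<Sum>x\<in>{b i j | j. j < s i}. rf_eval (\<beta> x) (vleft (cvec z)))
    = (\<Sum>y\<in>{c i k | k. k < t i}. rf_eval (\<beta>' y) (vright (cvec z)))"
  using bsum_agree[OF _ assms(1)] assms(2-4)
  unfolding B.bsum_def C.bsum_def B.blk_def C.blk_def conv_BC_def BC_def vleft_cvec vright_cvec
  by blast

end

theorem theorem3p1:
  fixes r :: nat and s t :: "nat \<Rightarrow> nat"
    and a :: "nat \<Rightarrow> int^'d"
    and b :: "nat \<Rightarrow> nat \<Rightarrow> int^'d1"
    and c :: "nat \<Rightarrow> nat \<Rightarrow> int^'d2"
    and \<pi>1 :: "int^'d1^'d" and \<pi>2 :: "int^'d2^'d"
    and w :: "int^'d1 \<Rightarrow> real" and w' :: "int^'d2 \<Rightarrow> real"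
    and \<beta> :: "int^'d1 \<Rightarrow> 'd1 ratfun" and \<beta>' :: "int^'d2 \<Rightarrow> 'd2 ratfun"
    and B :: "(int^'d1) set" and C :: "(int^'d2) set"
  assumes s_pos: "\<forall>i<r. s i \<ge> 1" and t_pos: "\<forall>i<r. t i \<ge> 1"
    and A_inj: "inj_on a {..<r}"
    and A_indep: "independent ((\<lambda>i. rvec (a i)) ` {..<r})"
    and A_hom: "\<exists>\<omega>::real^'d. (\<forall>l. \<omega> $ l \<in> \<rat>) \<and> (\<forall>i<r. \<omega> \<bullet> rvec (a i) = 1)"
    and B_def: "B = {b i j | i j. i < r \<and> j < s i}"
    and C_def: "C = {c i k | i k. i < r \<and> k < t i}"
    and \<pi>1: "\<forall>i<r. \<forall>j<s i. \<pi>1 *v b i j = a i"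
    and \<pi>2: "\<forall>i<r. \<forall>k<t i. \<pi>2 *v c i k = a i"
    and w_pos: "\<forall>x\<in>B. w x > 0" and w'_pos: "\<forall>y\<in>C. w' y > 0"
    and \<beta>: "blending_functions B w \<beta>"
    and \<beta>': "blending_functions C w' \<beta>'"
  shows "rational_linear_precision (toric_fiber_product r s t b c)
           (\<lambda>m. w (vleft m) * w' (vright m))
       \<and> (\<exists>\<gamma>. blending_functions (toric_fiber_product r s t b c)
                 (\<lambda>m. w (vleft m) * w' (vright m)) \<gamma>
            \<and> (\<forall>i<r. \<forall>j<s i. \<forall>k<t i. \<forall>x.
                 rf_defined (\<gamma> (vjoin (b i j) (c i k))) x
                 \<and> (\<forall>b'\<in>{b i j' | j'. j' < s i}. rf_defined (\<beta> b') (vleft x))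
                 \<and> rf_defined (\<beta>' (c i k)) (vright x)
                 \<and> (\<Sum>b'\<in>{b i j' | j'. j' < s i}. rf_eval (\<beta> b') (vleft x)) \<noteq> 0
                 \<longrightarrow> rf_eval (\<gamma> (vjoin (b i j) (c i k))) x
                     = rf_eval (\<beta> (b i j)) (vleft x) * rf_eval (\<beta>' (c i k)) (vright x)
                       / (\<Sum>b'\<in>{b i j' | j'. j' < s i}. rf_eval (\<beta> b') (vleft x)))
            \<and> (\<forall>i<r. \<forall>j<s i. \<forall>k<t i.
                 \<forall>z\<in>convex hull (rvec ` toric_fiber_product r s t b c).
                 (\<forall>b'\<in>{b i j' | j'. j' < s i}. rf_defined (\<beta> b') (vleft (cvec z)))
                 \<and> (\<forall>c'\<in>{c i k' | k'. k' < t i}. rf_defined (\<beta>' c') (vright (cvec z)))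
                 \<and> (\<Sum>b'\<in>{b i j' | j'. j' < s i}. rf_eval (\<beta> b') (vleft (cvec z))) \<noteq> 0
                 \<and> (\<Sum>c'\<in>{c i k' | k'. k' < t i}. rf_eval (\<beta>' c') (vright (cvec z))) \<noteq> 0
                 \<longrightarrow> rf_eval (\<beta> (b i j)) (vleft (cvec z)) * rf_eval (\<beta>' (c i k)) (vright (cvec z))
                       / (\<Sum>b'\<in>{b i j' | j'. j' < s i}. rf_eval (\<beta> b') (vleft (cvec z)))
                     = rf_eval (\<beta> (b i j)) (vleft (cvec z)) * rf_eval (\<beta>' (c i k)) (vright (cvec z))
                       / (\<Sum>c'\<in>{c i k' | k'. k' < t i}. rf_eval (\<beta>' c') (vright (cvec z)))))"
proof -
  interpret toric_fiber_product_setting r s t a b c \<pi>1 \<pi>2 w w' \<beta> \<beta>' B C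
    unfolding toric_fiber_product_setting_def fibred_configuration_def
    using s_pos t_pos A_inj A_indep B_def C_def \<pi>1 \<pi>2 w_pos w'_pos \<beta> \<beta>' by blast
  have "blending_functions (toric_fiber_product r s t b c) (\<lambda>m. w (vleft m) * w' (vright m)) \<gamma>"
    using blending_functions_\<gamma> by (simp add: BC_def wBC_def[abs_def])
  then show ?thesis
    unfolding rational_linear_precision_def
    using \<gamma>_eval_fibre fibre_sums_agree by (intro conjI exI[of _ \<gamma>]) auto
qed

end
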